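(* Let $u_0\in L^2([0,1])$ satisfy $2e^{\Vert u_0\Vert_{L^2}}\Vert u_0\Vert_{L^2}<1$, and let $u(t,\cdot)=\Phi^t_{\mathcal{B}}(u_0)$ be the solution of the Burgers problem $$\partial_t u=-u\partial_x u+\partial_{xx}u,\quad u(t,0)=u(t,1)=0,\quad u(0,x)=u_0(x).$$ Then for every $t>0$ and every $x\in[0,1]$, $$u(t,x)=\sum_{\nu\in\mathcal{A}} e^{\lambda_\nu t}\,\varphi_\nu(u_0)\,a_\nu(x),$$ where for each fixed $t>0$ the series converges absolutely (so its sum does not depend on the order of summation) and uniformly in $x\in[0,1]$.
   Context: Cole–Hopf transforms: for $u\in L^2([0,1])$, $H(u)(x)=\dfrac{e^{-\frac12\int_0^x u(s)ds}}{\int_0^1 e^{-\frac12\int_0^y u(s)ds}\,dy}$ (so $H(u)>0$ and $\int_0^1H(u)=1$); for $v>0$ with weak derivative in $L^2$ and $\int_0^1 v=1$, $C(v)=-2\,\partial_x v/v$. For $m\ge1$ let $e_m(x)=\sqrt2\cos(m\pi x)$ and $c_m(v)=\int_0^1 v(s)e_m(s)\,ds$. The heat flow with Neumann conditions is $\Phi^t_{\mathcal{C}}(v_0)=1+\sum_{m\ge1}e^{-m^2\pi^2t}c_m(v_0)e_m$ for $\int_0^1 v_0=1$, and the Burgers solution is given through the Cole–Hopf correspondence by $\Phi^t_{\mathcal{B}}(u_0)=C(\Phi^t_{\mathcal{C}}(H(u_0)))$. Define $l_n(u_0)=c_n(H(u_0))$ for $n\ge1$. Index set: $\mathcal{A}$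 is the set of finite tuples $\nu=(n_0,n_1,\dots,n_{\alpha(\nu)})$ with $\alpha(\nu)\in\mathbb{N}=\{0,1,2,\dots\}$, $n_0\in\mathbb{N}$ and $n_i\in\mathbb{N}\setminus\{0\}$ for $1\le i\le\alpha(\nu)$. For $\nu\in\mathcal{A}$: $\lambda_\nu=-\pi^2\sum_{k=0}^{\alpha(\nu)}n_k^2$; $a_\nu(x)=(-1)^{\alpha(\nu)}2^{\frac{\alpha(\nu)+3}{2}}n_0\pi\sin(n_0\pi x)\prod_{k=1}^{\alpha(\nu)}\cos(n_k\pi x)$ (empty product $=1$; note $a_\nu\equiv0$ when $n_0=0$); $\varphi_\nu(u_0)=\prod_{k=0}^{\alpha(\nu)}l_{n_k}(u_0)$ (only needed when $n_0\ge1$, since otherwise $a_\nu=0$). *)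

theory Defs
  imports "HOL-Analysis.Analysis"
begin

text \<open>Functions on [0,1] are represented as real functions on the reals; integrals are
Lebesgue integrals over subintervals of [0,1].\<close>

definition L2norm01 :: "(real \<Rightarrow> real) \<Rightarrow> real" where
  "L2norm01 u = sqrt (LINT s:{0..1}|lborel. (u s)^2)"

definition e_cos :: "nat \<Rightarrow> real \<Rightarrow> real" where
  "e_cos m x = sqrt 2 * cos (real m * pi * x)"

definition coef :: "nat \<Rightarrow> (real \<Rightarrow> real) \<Rightarrow> real" where
  "coef m v = (LINT s:{0..1}|lborel. v s * e_cos m s)"

definition ColeHopf_H :: "(real \<Rightarrow> real) \<Rightarrow> real \<Rightarrow> real" where
  "ColeHopf_H u x =
     exp (- (1/2) * (LINT s:{0..x}|lborel. u s)) /
     (LINT y:{0..1}|lborel. exp (- (1/2) * (LINT s:{0..y}|lborel. u s)))"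

definition ColeHopf_C :: "(real \<Rightarrow> real) \<Rightarrow> real \<Rightarrow> real" where
  "ColeHopf_C v x = -2 * deriv v x / v x"

definition heat_flow :: "real \<Rightarrow> (real \<Rightarrow> real) \<Rightarrow> real \<Rightarrow> real" where
  "heat_flow t v0 x =
     1 + (\<Sum>m. exp (- ((real (Suc m))^2 * pi^2 * t)) * coef (Suc m) v0 * e_cos (Suc m) x)"

definition burgers_flow :: "real \<Rightarrow> (real \<Rightarrow> real) \<Rightarrow> real \<Rightarrow> real" where
  "burgers_flow t u0 = ColeHopf_C (heat_flow t (ColeHopf_H u0))"

definition l_coef :: "nat \<Rightarrow> (real \<Rightarrow> real) \<Rightarrow> real" where
  "l_coef n u0 = coef n (ColeHopf_H u0)"

text \<open>Index set: a tuple (n_0, n_1, ..., n_\<alpha>) is a nonempty list whose head is n_0 and whose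
tail entries are positive; \<alpha> = length - 1.\<close>
definition idxA :: "nat list set" where
  "idxA = {\<nu>. \<nu> \<noteq> [] \<and> (\<forall>k\<in>set (tl \<nu>). 0 < k)}"

definition lam :: "nat list \<Rightarrow> real" where
  "lam \<nu> = - (pi^2 * (\<Sum>k\<leftarrow>\<nu>. (real k)^2))"

definition a_fun :: "nat list \<Rightarrow> real \<Rightarrow> real" where
  "a_fun \<nu> x = (-1) ^ (length \<nu> - 1) * 2 powr ((real (length \<nu> - 1) + 3) / 2)
      * real (hd \<nu>) * pi * sin (real (hd \<nu>) * pi * x)
      * (\<Prod>k\<leftarrow>tl \<nu>. cos (real k * pi * x))"

definition phi :: "nat list \<Rightarrow> (real \<Rightarrow> real) \<Rightarrow> real" where
  "phi \<nu> u0 = (\<Prod>k\<leftarrow>\<nu>. l_coef k u0)"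

definition series_term :: "real \<Rightarrow> (real \<Rightarrow> real) \<Rightarrow> nat list \<Rightarrow> real \<Rightarrow> real" where
  "series_term t u0 \<nu> x = exp (lam \<nu> * t) * phi \<nu> u0 * a_fun \<nu> x"

end

(*
  By the Cole-Hopf correspondence, u(t) = -2 v_x / v, where v = 1 + sum_{k>=1} e^{-k^2 pi^2 t} l_k e_k
  is the Neumann heat flow started at H(u0).  Write the numerator as sum_n a_n(x) and the
  denominator as 1 + sum_k b_k(x).  Once sum_k sup_x |b_k| < 1, expanding 1 / (1 + sum_k b_k) as the
  geometric series sum_alpha (-sum_k b_k)^alpha and multiplying out yields exactly the sum over the
  tuples nu in A; every term is dominated independently of x, so the sum converges absolutely and
  uniformly.

  The smallness comes from sum_{k>=1} sqrt 2 |l_k| <= 1/2.  Since H' = -u0 H / 2, integration by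
  parts gives n pi l_n = <u0 H / 2, sqrt 2 sin(n pi .)>; Bessel's inequality, H <= exp ||u0||,
  AM-GM and sum 1/n^2 = pi^2/6 then reduce the bound to 2 e^||u0|| ||u0|| < 1.
*)

theory Submission
  imports Defs
begin

section \<open>Absolutely summable products and sums over lists\<close>

lemma has_sum_product_of_abs_summable:
  fixes f :: "'a \<Rightarrow> real" and g :: "'b \<Rightarrow> real"
  assumes f: "(\<lambda>x. \<bar>f x\<bar>) summable_on A" and g: "(\<lambda>y. \<bar>g y\<bar>) summable_on B"
  shows "((\<lambda>(x, y). f x * g y) has_sum infsum f A * infsum g B) (A \<times> B)"
proof (rule has_sum_SigmaI)
  have "(\<lambda>(x, y). \<bar>f x\<bar> * \<bar>g y\<bar>) summable_on A \<times> B"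
  proof (rule summable_on_SigmaI)
    show "((\<lambda>y. case (x, y) of (x, y) \<Rightarrow> \<bar>f x\<bar> * \<bar>g y\<bar>) has_sum \<bar>f x\<bar> * infsum (\<lambda>y. \<bar>g y\<bar>) B) B" for x
      using has_sum_cmult_right[OF has_sum_infsum[OF g]] by simp
    show "(\<lambda>x. \<bar>f x\<bar> * infsum (\<lambda>y. \<bar>g y\<bar>) B) summable_on A"
      using summable_on_cmult_left[OF f] .
  qed simp
  moreover have "norm (case z of (x, y) \<Rightarrow> f x * g y) = (case z of (x, y) \<Rightarrow> \<bar>f x\<bar> * \<bar>g y\<bar>)" for z
    by (simp add: case_prod_unfold abs_mult)
  ultimately show "(\<lambda>(x, y). f x * g y) summable_on A \<times> B"
    using abs_summable_summable[of "\<lambda>(x, y). f x * g y" "A \<times> B"] by simp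
  have "f summable_on A" "g summable_on B"
    using f g abs_summable_summable[of f A] abs_summable_summable[of g B] by simp_all
  then show "((\<lambda>y. case (x, y) of (x, y) \<Rightarrow> f x * g y) has_sum f x * infsum g B) B"
    and "((\<lambda>x. f x * infsum g B) has_sum infsum f A * infsum g B) A" for x
    by (simp_all add: has_sum_cmult_left has_sum_cmult_right)
qed

lemma lists_length_Suc_eq_image_Cons:
  "{xs \<in> lists K. length xs = Suc n} = (\<lambda>(k, xs). k # xs) ` (K \<times> {xs \<in> lists K. length xs = n})"
  by (auto simp: length_Suc_conv image_iff)

lemma abs_prod_list: "\<bar>prod_list (map (b :: 'a \<Rightarrow> real) xs)\<bar> = prod_list (map (\<lambda>k. \<bar>b k\<bar>) xs)"
  by (induction xs) (auto simp: abs_mult)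

lemma prod_list_map_uminus:
  "prod_list (map (\<lambda>k. - b k) xs) = (-1) ^ length xs * prod_list (map (b :: 'a \<Rightarrow> 'b :: comm_ring_1) xs)"
  by (induction xs) simp_all

lemma prod_list_map_mult:
  "(\<Prod>k\<leftarrow>xs. f k * g k) = (\<Prod>k\<leftarrow>xs. f k) * (\<Prod>k\<leftarrow>xs. (g k :: 'b :: comm_monoid_mult))"
  by (induction xs) (simp_all add: mult_ac)

lemma prod_list_map_mono:
  fixes f g :: "'a \<Rightarrow> real"
  assumes "\<And>k. k \<in> set xs \<Longrightarrow> 0 \<le> f k" and "\<And>k. k \<in> set xs \<Longrightarrow> f k \<le> g k"
  shows "prod_list (map f xs) \<le> prod_list (map g xs)"
  using assms
proof (induction xs)
  case (Cons k xs)
  have "0 \<le> f k" "f k \<le> g k"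
    using Cons.prems by auto
  moreover have "0 \<le> prod_list (map f xs)"
    using Cons.prems by (intro prod_list_nonneg) auto
  moreover have "prod_list (map f xs) \<le> prod_list (map g xs)"
    using Cons by simp
  ultimately show ?case
    by (simp add: mult_mono)
qed simp

lemma has_sum_prod_list_lists_length:
  fixes b :: "'a \<Rightarrow> real"
  assumes "(\<lambda>k. \<bar>b k\<bar>) summable_on K"
  shows "((\<lambda>xs. prod_list (map b xs)) has_sum (infsum b K) ^ n) {xs \<in> lists K. length xs = n}"
  using assms
proof (induction n arbitrary: b)
  case 0
  have "{xs \<in> lists K. length xs = 0} = {[]}" by auto
  then show ?case by (simp add: has_sum_finiteI)
next
  case (Suc n)
  let ?L = "{xs \<in> lists K. length xs = n}"
  have "(\<lambda>k. \<bar>\<bar>b k\<bar>\<bar>) summable_on K" using Suc.prems by simp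
  then have "(\<lambda>xs. \<bar>prod_list (map b xs)\<bar>) summable_on ?L"
    unfolding abs_prod_list by (rule has_sum_imp_summable[OF Suc.IH])
  from has_sum_product_of_abs_summable[OF Suc.prems this]
  have "((\<lambda>(k, xs). b k * prod_list (map b xs)) has_sum infsum b K * infsum b K ^ n) (K \<times> ?L)"
    unfolding infsumI[OF Suc.IH[OF Suc.prems]] .
  moreover have "inj_on (\<lambda>(k, xs). k # xs) (K \<times> ?L)"
    by (auto simp: inj_on_def)
  ultimately show ?case
    unfolding lists_length_Suc_eq_image_Cons has_sum_reindex[OF \<open>inj_on _ _\<close>]
    by (simp add: o_def case_prod_unfold)
qed

lemma has_sum_prod_list_lists:
  fixes b :: "'a \<Rightarrow> real"
  assumes b: "(\<lambda>k. \<bar>b k\<bar>) summable_on K" and small: "infsum (\<lambda>k. \<bar>b k\<bar>) K < 1"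
  shows "((\<lambda>xs. prod_list (map b xs)) has_sum 1 / (1 - infsum b K)) (lists K)"
proof -
  define W where "W = infsum b K"
  have "\<bar>W\<bar> < 1"
    using norm_infsum_bound[of b K] b small unfolding W_def by simp
  let ?layer = "\<lambda>n. {xs \<in> lists K. length xs = n}"
  have inj: "inj_on (\<lambda>xs. (length xs, xs)) (lists K)" by (auto simp: inj_on_def)
  have img: "(\<lambda>xs. (length xs, xs)) ` lists K = Sigma UNIV ?layer" by (auto simp: image_iff)
  have "(\<lambda>(n, xs). \<bar>prod_list (map b xs)\<bar>) summable_on Sigma UNIV ?layer"
  proof (rule summable_on_SigmaI[where g = "\<lambda>n. infsum (\<lambda>k. \<bar>b k\<bar>) K ^ n"])
    show "((\<lambda>xs. case (n, xs) of (n, xs) \<Rightarrow> \<bar>prod_list (map b xs)\<bar>) has_sum infsum (\<lambda>k. \<bar>b k\<bar>) K ^ n) (?layer n)" for n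
      using has_sum_prod_list_lists_length[of "\<lambda>k. \<bar>b k\<bar>" K n] b by (simp add: abs_prod_list)
    show "(\<lambda>n. infsum (\<lambda>k. \<bar>b k\<bar>) K ^ n) summable_on UNIV"
      using small infsum_nonneg[of K "\<lambda>k. \<bar>b k\<bar>"]
      by (subst summable_on_UNIV_nonneg_real_iff) (simp_all add: summable_geometric)
  qed simp
  then have "(\<lambda>(n, xs). prod_list (map b xs)) summable_on Sigma UNIV ?layer"
    using abs_summable_summable[of "\<lambda>(n, xs). prod_list (map b xs)" "Sigma UNIV ?layer"]
    by (simp add: case_prod_unfold)
  then have "((\<lambda>(n, xs). prod_list (map b xs)) has_sum 1 / (1 - W)) (Sigma UNIV ?layer)"
  proof (rule has_sum_SigmaI[rotated 2])
    show "((\<lambda>xs. case (n, xs) of (n, xs) \<Rightarrow> prod_list (map b xs)) has_sum W ^ n) (?layer n)" for n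
      using has_sum_prod_list_lists_length[OF b, of n] by (simp add: W_def)
    show "((\<lambda>n. W ^ n) has_sum 1 / (1 - W)) UNIV"
    proof (rule norm_summable_imp_has_sum)
      show "summable (\<lambda>n. norm (W ^ n))"
        using \<open>\<bar>W\<bar> < 1\<close> by (simp add: power_abs summable_geometric)
      show "(\<lambda>n. W ^ n) sums (1 / (1 - W))"
        using geometric_sums[of W] \<open>\<bar>W\<bar> < 1\<close> by simp
    qed
  qed
  then show ?thesis
    unfolding W_def img[symmetric] has_sum_reindex[OF inj] by (simp add: o_def)
qed

section \<open>Absolutely continuous functions\<close>

lemma integral_estimate_of_local_estimate:
  fixes F f w :: "real \<Rightarrow> real"
  assumes f: "f integrable_on {a..b}" and w: "w integrable_on {a..b}" and "\<delta> > 0"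
    and local: "\<And>x y. a \<le> x \<Longrightarrow> x \<le> y \<Longrightarrow> y \<le> b \<Longrightarrow> y - x < \<delta> \<Longrightarrow>
                  \<bar>F y - F x - integral {x..y} f\<bar> \<le> \<eta> * integral {x..y} w"
    and x: "a \<le> x" "x \<le> b"
  shows "\<bar>F x - F a - integral {a..x} f\<bar> \<le> \<eta> * integral {a..x} w"
proof -
  obtain n :: nat where "(x - a) / (\<delta> / 2) \<le> real n"
    using real_arch_simple by blast
  then have "x - a \<le> real n * (\<delta> / 2)"
    using \<open>\<delta> > 0\<close> by (simp add: pos_divide_le_eq)
  with x show ?thesis
  proof (induction n arbitrary: x)
    case (Suc n)
    define y where "y = max a (x - \<delta> / 2)"
    have y: "a \<le> y" "y \<le> x" "y - a \<le> real n * (\<delta> / 2)" "x - y < \<delta>"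
      using Suc.prems \<open>\<delta> > 0\<close> unfolding y_def max_def by (auto simp: algebra_simps)
    have f_split: "integral {a..y} f + integral {y..x} f = integral {a..x} f"
      using y Suc.prems integrable_subinterval_real[OF f, of a x]
      by (intro Henstock_Kurzweil_Integration.integral_combine) auto
    have w_split: "integral {a..y} w + integral {y..x} w = integral {a..x} w"
      using y Suc.prems integrable_subinterval_real[OF w, of a x]
      by (intro Henstock_Kurzweil_Integration.integral_combine) auto
    have "\<bar>F x - F a - integral {a..x} f\<bar>
        \<le> \<bar>F y - F a - integral {a..y} f\<bar> + \<bar>F x - F y - integral {y..x} f\<bar>"
      using f_split by linarith
    also have "\<dots> \<le> \<eta> * integral {a..y} w + \<eta> * integral {y..x} w"
      using Suc.IH[OF y(1) _ y(3)] local[OF y(1,2) _ y(4)] y Suc.prems by (intro add_mono) auto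
    also have "\<dots> = \<eta> * integral {a..x} w"
      unfolding w_split[symmetric] by (rule distrib_left[symmetric])
    finally show ?case .
  qed simp
qed

(* Replaces the fundamental theorem of calculus, whose library versions need differentiability
   outside a countable set: the exponential of an indefinite integral of an integrable function
   is merely absolutely continuous. *)
lemma integral_eq_of_local_estimate:
  fixes F f w :: "real \<Rightarrow> real"
  assumes ab: "a \<le> b" and f: "f integrable_on {a..b}" and w: "w integrable_on {a..b}"
    and local: "\<And>e. e > 0 \<Longrightarrow> \<exists>\<delta>>0. \<forall>x y. a \<le> x \<longrightarrow> x \<le> y \<longrightarrow> y \<le> b \<longrightarrow> y - x < \<delta> \<longrightarrow>
                  \<bar>F y - F x - integral {x..y} f\<bar> \<le> e * integral {x..y} w"
  shows "F b - F a = integral {a..b} f"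
proof -
  define K where "K = \<bar>integral {a..b} w\<bar> + 1"
  have "K > 0" by (simp add: K_def add_nonneg_pos)
  have "\<bar>F b - F a - integral {a..b} f\<bar> \<le> 0 + \<epsilon>" if "\<epsilon> > 0" for \<epsilon>
  proof -
    obtain \<delta> where "\<delta> > 0" and \<delta>: "\<forall>x y. a \<le> x \<longrightarrow> x \<le> y \<longrightarrow> y \<le> b \<longrightarrow> y - x < \<delta> \<longrightarrow>
        \<bar>F y - F x - integral {x..y} f\<bar> \<le> \<epsilon> / K * integral {x..y} w"
      using local[of "\<epsilon> / K"] \<open>\<epsilon> > 0\<close> \<open>K > 0\<close> by auto
    have "\<bar>F b - F a - integral {a..b} f\<bar> \<le> \<epsilon> / K * integral {a..b} w"
      using \<delta> ab by (intro integral_estimate_of_local_estimate[OF f w \<open>\<delta> > 0\<close>]) auto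
    also have "\<dots> \<le> \<epsilon> / K * K"
      using \<open>\<epsilon> > 0\<close> \<open>K > 0\<close> by (intro mult_left_mono) (auto simp: K_def)
    finally show ?thesis
      using \<open>K > 0\<close> by simp
  qed
  then have "\<bar>F b - F a - integral {a..b} f\<bar> \<le> 0"
    by (rule field_le_epsilon)
  then show ?thesis by simp
qed

lemma absolutely_integrable_mult_continuous:
  fixes f g :: "real \<Rightarrow> real"
  assumes f: "f absolutely_integrable_on {a..b}" and g: "continuous_on {a..b} g"
  shows "(\<lambda>x. g x * f x) absolutely_integrable_on {a..b}"
proof (rule absolutely_integrable_bounded_measurable_product_real)
  show "g \<in> borel_measurable (lebesgue_on {a..b})"
    by (rule continuous_imp_measurable_on_sets_lebesgue[OF g]) simp
  show "bounded (g ` {a..b})"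
    by (rule compact_imp_bounded[OF compact_continuous_image[OF g compact_Icc]])
qed (use f in auto)

lemma integrable_mult_continuous_subinterval:
  fixes f g :: "real \<Rightarrow> real"
  assumes "f absolutely_integrable_on {a..b}" "continuous_on {a..b} g" "a \<le> x" "y \<le> b"
  shows "(\<lambda>s. g s * f s) integrable_on {x..y}"
proof -
  have sub: "{x..y} \<subseteq> {a..b}" using assms by auto
  show ?thesis
    by (rule set_lebesgue_integral_eq_integral(1)[OF absolutely_integrable_mult_continuous])
       (use absolutely_integrable_on_subinterval[OF assms(1) sub] continuous_on_subset[OF assms(2) sub] in auto)
qed

lemma uniformly_continuous_on_Icc_real:
  fixes F :: "real \<Rightarrow> real"
  assumes "continuous_on {a..b} F" "e > 0"
  obtains \<delta> where "\<delta> > 0" "\<And>x y. x \<in> {a..b} \<Longrightarrow> y \<in> {a..b} \<Longrightarrow> \<bar>y - x\<bar> < \<delta> \<Longrightarrow> \<bar>F y - F x\<bar> < e"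
  using compact_uniformly_continuous[OF assms(1) compact_Icc] assms(2)
  unfolding uniformly_continuous_on_def dist_real_def by metis

lemma continuous_on_primitive:
  fixes F f :: "real \<Rightarrow> real"
  assumes f: "f integrable_on {a..b}" and F: "\<forall>x\<in>{a..b}. F x = F a + integral {a..x} f"
  shows "continuous_on {a..b} F"
proof (rule continuous_on_eq)
  show "continuous_on {a..b} (\<lambda>x. F a + integral {a..x} f)"
    by (intro continuous_intros indefinite_integral_continuous_1 f)
  show "F a + integral {a..x} f = F x" if "x \<in> {a..b}" for x
    using bspec[OF F that] by (rule sym)
qed

lemma primitive_increment:
  fixes F f :: "real \<Rightarrow> real"
  assumes f: "f integrable_on {a..b}" and F: "\<forall>x\<in>{a..b}. F x = F a + integral {a..x} f"
    and "a \<le> x" "x \<le> y" "y \<le> b"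
  shows "F y - F x = integral {x..y} f"
  using bspec[OF F, of x] bspec[OF F, of y] Henstock_Kurzweil_Integration.integral_combine[of a x y f]
    integrable_subinterval_real[OF f, of a y] assms(3-5) by auto

lemma product_increment_estimate:
  fixes F G f g :: "real \<Rightarrow> real"
  assumes incr: "F y - F x = integral {x..y} f" "G y - G x = integral {x..y} g"
    and f: "f absolutely_integrable_on {x..y}" and g: "g absolutely_integrable_on {x..y}"
    and fG: "(\<lambda>s. G s * f s) integrable_on {x..y}" and Fg: "(\<lambda>s. F s * g s) integrable_on {x..y}"
    and osc: "\<And>s. s \<in> {x..y} \<Longrightarrow> \<bar>G y - G s\<bar> \<le> e" "\<And>s. s \<in> {x..y} \<Longrightarrow> \<bar>F x - F s\<bar> \<le> e"
  shows "\<bar>F y * G y - F x * G x - integral {x..y} (\<lambda>s. f s * G s + F s * g s)\<bar>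
    \<le> e * integral {x..y} (\<lambda>s. \<bar>f s\<bar> + \<bar>g s\<bar>)"
proof -
  have fi: "f integrable_on {x..y}" and gi: "g integrable_on {x..y}"
    and afi: "(\<lambda>s. \<bar>f s\<bar>) integrable_on {x..y}" and agi: "(\<lambda>s. \<bar>g s\<bar>) integrable_on {x..y}"
    using f g by (auto simp: absolutely_integrable_on_def)
  define r where "r s = f s * (G y - G s) + (F x - F s) * g s" for s
  have lin: "(\<lambda>s. G y * f s + F x * g s) integrable_on {x..y}"
    by (intro integrable_add integrable_on_mult_right fi gi)
  have prod: "(\<lambda>s. G s * f s + F s * g s) integrable_on {x..y}"
    by (rule integrable_add[OF fG Fg])
  have r_eq: "r = (\<lambda>s. (G y * f s + F x * g s) - (G s * f s + F s * g s))"
    by (simp add: r_def fun_eq_iff algebra_simps)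
  have r_int: "r integrable_on {x..y}"
    unfolding r_eq by (rule integrable_diff[OF lin prod])
  have "integral {x..y} r = G y * (F y - F x) + F x * (G y - G x) - integral {x..y} (\<lambda>s. G s * f s + F s * g s)"
    unfolding r_eq integral_diff[OF lin prod] integral_add[OF integrable_on_mult_right[OF fi] integrable_on_mult_right[OF gi]]
    using incr by simp
  then have "F y * G y - F x * G x - integral {x..y} (\<lambda>s. f s * G s + F s * g s) = integral {x..y} r"
    by (simp add: algebra_simps)
  also have "\<bar>\<dots>\<bar> \<le> integral {x..y} (\<lambda>s. e * (\<bar>f s\<bar> + \<bar>g s\<bar>))"
  proof (rule integral_norm_bound_integral[OF r_int integrable_on_mult_right[OF integrable_add[OF afi agi]],
        unfolded real_norm_def])
    fix s assume "s \<in> {x..y}"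
    have "\<bar>r s\<bar> \<le> \<bar>f s\<bar> * \<bar>G y - G s\<bar> + \<bar>F x - F s\<bar> * \<bar>g s\<bar>"
      unfolding r_def abs_mult[symmetric] by (rule abs_triangle_ineq)
    also have "\<dots> \<le> \<bar>f s\<bar> * e + e * \<bar>g s\<bar>"
      using osc \<open>s \<in> {x..y}\<close> by (intro add_mono mult_left_mono mult_right_mono) auto
    finally show "\<bar>r s\<bar> \<le> e * (\<bar>f s\<bar> + \<bar>g s\<bar>)"
      by (simp add: algebra_simps)
  qed
  finally show ?thesis by simp
qed

lemma integral_product_rule:
  fixes F G f g :: "real \<Rightarrow> real"
  assumes ab: "a \<le> b"
    and f: "f absolutely_integrable_on {a..b}" and g: "g absolutely_integrable_on {a..b}"
    and F: "\<forall>x\<in>{a..b}. F x = F a + integral {a..x} f"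
    and G: "\<forall>x\<in>{a..b}. G x = G a + integral {a..x} g"
  shows "F b * G b - F a * G a = integral {a..b} (\<lambda>s. f s * G s + F s * g s)"
proof -
  have fi: "f integrable_on {a..b}" and gi: "g integrable_on {a..b}"
    and afi: "(\<lambda>s. \<bar>f s\<bar>) integrable_on {a..b}" and agi: "(\<lambda>s. \<bar>g s\<bar>) integrable_on {a..b}"
    using f g by (auto simp: absolutely_integrable_on_def)
  have F_cont: "continuous_on {a..b} F" and G_cont: "continuous_on {a..b} G"
    using continuous_on_primitive[OF fi F] continuous_on_primitive[OF gi G] .
  have fG: "(\<lambda>s. G s * f s) integrable_on {x..y}" and Fg: "(\<lambda>s. F s * g s) integrable_on {x..y}"
    if "a \<le> x" "y \<le> b" for x y
    using integrable_mult_continuous_subinterval[OF f G_cont that]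
      integrable_mult_continuous_subinterval[OF g F_cont that] by auto
  show ?thesis
  proof (rule integral_eq_of_local_estimate[where w = "\<lambda>s. \<bar>f s\<bar> + \<bar>g s\<bar>"])
    show "(\<lambda>s. f s * G s + F s * g s) integrable_on {a..b}"
      using fG[of a b] Fg[of a b] by (simp add: integrable_add mult.commute)
    show "(\<lambda>s. \<bar>f s\<bar> + \<bar>g s\<bar>) integrable_on {a..b}"
      by (rule integrable_add[OF afi agi])
    fix e :: real assume "e > 0"
    obtain \<delta>F where "\<delta>F > 0" and \<delta>F: "\<And>x y. x \<in> {a..b} \<Longrightarrow> y \<in> {a..b} \<Longrightarrow> \<bar>y - x\<bar> < \<delta>F \<Longrightarrow> \<bar>F y - F x\<bar> < e"
      using uniformly_continuous_on_Icc_real[OF F_cont \<open>e > 0\<close>] by blast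
    obtain \<delta>G where "\<delta>G > 0" and \<delta>G: "\<And>x y. x \<in> {a..b} \<Longrightarrow> y \<in> {a..b} \<Longrightarrow> \<bar>y - x\<bar> < \<delta>G \<Longrightarrow> \<bar>G y - G x\<bar> < e"
      using uniformly_continuous_on_Icc_real[OF G_cont \<open>e > 0\<close>] by blast
    have "\<bar>F y * G y - F x * G x - integral {x..y} (\<lambda>s. f s * G s + F s * g s)\<bar>
        \<le> e * integral {x..y} (\<lambda>s. \<bar>f s\<bar> + \<bar>g s\<bar>)"
      if xy: "a \<le> x" "x \<le> y" "y \<le> b" "y - x < min \<delta>F \<delta>G" for x y
    proof (rule product_increment_estimate)
      have sub: "{x..y} \<subseteq> {a..b}" using xy by auto
      show "F y - F x = integral {x..y} f" "G y - G x = integral {x..y} g"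
        using primitive_increment[OF fi F] primitive_increment[OF gi G] xy by auto
      show "f absolutely_integrable_on {x..y}" "g absolutely_integrable_on {x..y}"
        using absolutely_integrable_on_subinterval[OF f sub] absolutely_integrable_on_subinterval[OF g sub] .
      show "\<bar>G y - G s\<bar> \<le> e" "\<bar>F x - F s\<bar> \<le> e" if "s \<in> {x..y}" for s
        using \<delta>F[of s x] \<delta>G[of s y] that sub xy by auto
    qed (use fG Fg xy in auto)
    then show "\<exists>\<delta>>0. \<forall>x y. a \<le> x \<longrightarrow> x \<le> y \<longrightarrow> y \<le> b \<longrightarrow> y - x < \<delta> \<longrightarrow>
        \<bar>F y * G y - F x * G x - integral {x..y} (\<lambda>s. f s * G s + F s * g s)\<bar>
          \<le> e * integral {x..y} (\<lambda>s. \<bar>f s\<bar> + \<bar>g s\<bar>)"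
      using \<open>\<delta>F > 0\<close> \<open>\<delta>G > 0\<close> by (intro exI[of _ "min \<delta>F \<delta>G"]) auto
  qed (use ab in auto)
qed

lemma abs_exp_minus_one_le:
  fixes y :: real
  shows "\<bar>exp y - 1\<bar> \<le> exp \<bar>y\<bar> * \<bar>y\<bar>"
proof -
  obtain t where t: "\<bar>t\<bar> \<le> \<bar>y\<bar>" and "exp y = (\<Sum>m<1. y ^ m / fact m) + exp t / fact 1 * y ^ 1"
    using Maclaurin_exp_le[of y 1] by blast
  then have "\<bar>exp y - 1\<bar> = exp t * \<bar>y\<bar>"
    by (simp add: abs_mult)
  also have "\<dots> \<le> exp \<bar>y\<bar> * \<bar>y\<bar>"
    using t by (intro mult_right_mono) auto
  finally show ?thesis .
qed

lemma abs_exp_minus_one_minus_le: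
  fixes z :: real
  shows "\<bar>exp z - 1 - z\<bar> \<le> exp \<bar>z\<bar> * z\<^sup>2 / 2"
proof -
  obtain t where t: "\<bar>t\<bar> \<le> \<bar>z\<bar>" and "exp z = (\<Sum>m<2. z ^ m / fact m) + exp t / fact 2 * z ^ 2"
    using Maclaurin_exp_le[of z 2] by blast
  then have "\<bar>exp z - 1 - z\<bar> = exp t * z\<^sup>2 / 2"
    by (simp add: eval_nat_numeral)
  also have "\<dots> \<le> exp \<bar>z\<bar> * z\<^sup>2 / 2"
    using t by (intro divide_right_mono mult_right_mono) auto
  finally show ?thesis .
qed

lemma exp_integral_local_estimate:
  fixes u :: "real \<Rightarrow> real"
  assumes u: "u absolutely_integrable_on {p..q}"
    and small: "\<And>s. s \<in> {p..q} \<Longrightarrow> \<bar>integral {p..s} u\<bar> \<le> \<eta>" and "\<eta> \<le> 1"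
  shows "\<bar>exp (integral {p..q} u) - 1 - integral {p..q} (\<lambda>s. u s * exp (integral {p..s} u))\<bar>
    \<le> 5 * \<eta> * integral {p..q} (\<lambda>s. \<bar>u s\<bar>)"
proof (cases "p \<le> q")
  case True
  define D where "D = integral {p..q} u"
  define I where "I = integral {p..q} (\<lambda>s. \<bar>u s\<bar>)"
  have ui: "u integrable_on {p..q}" and aui: "(\<lambda>s. \<bar>u s\<bar>) integrable_on {p..q}"
    using u by (auto simp: absolutely_integrable_on_def)
  have "\<bar>D\<bar> \<le> \<eta>" "\<bar>D\<bar> \<le> I"
    using small[of q] True integral_norm_bound_integral[OF ui aui] by (auto simp: D_def I_def)
  have exp_le_3: "exp \<bar>y\<bar> \<le> 3" if "\<bar>y\<bar> \<le> \<eta>" for y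
  proof -
    have "exp \<bar>y\<bar> \<le> exp 1" using that \<open>\<eta> \<le> 1\<close> by simp
    then show ?thesis using exp_le by linarith
  qed
  have dev_i: "(\<lambda>s. (exp (integral {p..s} u) - 1) * u s) integrable_on {p..q}"
    using integrable_mult_continuous_subinterval[OF u, of "\<lambda>s. exp (integral {p..s} u) - 1" p q]
    by (simp add: continuous_intros indefinite_integral_continuous_1 ui)
  have "integral {p..q} (\<lambda>s. u s * exp (integral {p..s} u))
      = D + integral {p..q} (\<lambda>s. (exp (integral {p..s} u) - 1) * u s)"
    unfolding D_def integral_add[OF ui dev_i, symmetric] by (rule integral_cong) (simp add: algebra_simps)
  then have "\<bar>exp D - 1 - integral {p..q} (\<lambda>s. u s * exp (integral {p..s} u))\<bar>
      \<le> \<bar>exp D - 1 - D\<bar> + \<bar>integral {p..q} (\<lambda>s. (exp (integral {p..s} u) - 1) * u s)\<bar>"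
    by linarith
  also have "\<dots> \<le> 3 / 2 * (\<eta> * I) + integral {p..q} (\<lambda>s. 3 * \<eta> * \<bar>u s\<bar>)"
  proof (rule add_mono)
    have "\<bar>exp D - 1 - D\<bar> \<le> exp \<bar>D\<bar> * (\<bar>D\<bar> * \<bar>D\<bar>) / 2"
      using abs_exp_minus_one_minus_le[of D] by (simp add: power2_eq_square)
    also have "\<dots> \<le> 3 * (\<eta> * I) / 2"
      using exp_le_3 \<open>\<bar>D\<bar> \<le> \<eta>\<close> \<open>\<bar>D\<bar> \<le> I\<close> by (intro divide_right_mono mult_mono) auto
    finally show "\<bar>exp D - 1 - D\<bar> \<le> 3 / 2 * (\<eta> * I)" by simp
    show "\<bar>integral {p..q} (\<lambda>s. (exp (integral {p..s} u) - 1) * u s)\<bar> \<le> integral {p..q} (\<lambda>s. 3 * \<eta> * \<bar>u s\<bar>)"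
    proof (rule integral_norm_bound_integral[OF dev_i, unfolded real_norm_def])
      show "(\<lambda>s. 3 * \<eta> * \<bar>u s\<bar>) integrable_on {p..q}"
        by (rule integrable_on_mult_right[OF aui])
      fix s assume "s \<in> {p..q}"
      then have "\<bar>exp (integral {p..s} u) - 1\<bar> \<le> 3 * \<eta>"
        using abs_exp_minus_one_le[of "integral {p..s} u"] exp_le_3 small
        by (meson abs_ge_zero mult_mono order_trans zero_le_numeral)
      then show "\<bar>(exp (integral {p..s} u) - 1) * u s\<bar> \<le> 3 * \<eta> * \<bar>u s\<bar>"
        by (simp add: abs_mult mult_right_mono)
    qed
  qed
  also have "\<dots> \<le> 5 * \<eta> * I"
    using \<open>\<bar>D\<bar> \<le> \<eta>\<close> \<open>\<bar>D\<bar> \<le> I\<close> mult_nonneg_nonneg[of \<eta> I] by (simp add: I_def)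
  finally show ?thesis
    by (simp add: D_def I_def)
qed simp

lemma exp_primitive_local_estimate:
  fixes u :: "real \<Rightarrow> real"
  assumes u: "u absolutely_integrable_on {a..b}" and pq: "a \<le> p" "p \<le> q" "q \<le> b"
    and small: "\<And>s. s \<in> {p..q} \<Longrightarrow> \<bar>integral {a..s} u - integral {a..p} u\<bar> \<le> \<eta>" and "\<eta> \<le> 1"
  shows "\<bar>exp (integral {a..q} u) - exp (integral {a..p} u) - integral {p..q} (\<lambda>s. u s * exp (integral {a..s} u))\<bar>
    \<le> exp (integral {a..p} u) * (5 * \<eta> * integral {p..q} (\<lambda>s. \<bar>u s\<bar>))"
proof -
  let ?E = "\<lambda>s. exp (integral {a..s} u)"
  have sub: "{p..q} \<subseteq> {a..b}" using pq by auto
  have ui: "u integrable_on {a..b}"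
    using u by (simp add: absolutely_integrable_on_def)
  have increment: "integral {p..s} u = integral {a..s} u - integral {a..p} u" if "s \<in> {p..q}" for s
    using primitive_increment[OF ui, of "\<lambda>s. integral {a..s} u" p s] that pq by simp
  have shift: "?E s = ?E p * exp (integral {p..s} u)" if "s \<in> {p..q}" for s
    using increment[OF that] by (simp add: exp_diff)
  have "integral {p..q} (\<lambda>s. u s * ?E s) = integral {p..q} (\<lambda>s. ?E p * (u s * exp (integral {p..s} u)))"
  proof (rule integral_cong)
    fix s assume "s \<in> {p..q}"
    then show "u s * ?E s = ?E p * (u s * exp (integral {p..s} u))"
      using shift[of s] by simp
  qed
  also have "\<dots> = ?E p * integral {p..q} (\<lambda>s. u s * exp (integral {p..s} u))"
    by simp
  finally have "integral {p..q} (\<lambda>s. u s * ?E s) = ?E p * integral {p..q} (\<lambda>s. u s * exp (integral {p..s} u))" .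
  then have "?E q - ?E p - integral {p..q} (\<lambda>s. u s * ?E s)
      = ?E p * (exp (integral {p..q} u) - 1 - integral {p..q} (\<lambda>s. u s * exp (integral {p..s} u)))"
    using shift[of q] pq by (simp add: algebra_simps)
  also have "\<bar>\<dots>\<bar> \<le> ?E p * (5 * \<eta> * integral {p..q} (\<lambda>s. \<bar>u s\<bar>))"
    unfolding abs_mult abs_exp_cancel
    using small increment absolutely_integrable_on_subinterval[OF u sub] \<open>\<eta> \<le> 1\<close>
    by (intro mult_left_mono exp_integral_local_estimate) auto
  finally show ?thesis .
qed

lemma exp_indefinite_integral:
  fixes u :: "real \<Rightarrow> real"
  assumes u: "u absolutely_integrable_on {a..b}" and x: "x \<in> {a..b}"
  shows "exp (integral {a..x} u) = 1 + integral {a..x} (\<lambda>s. u s * exp (integral {a..s} u))"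
proof -
  define U where "U x = integral {a..x} u" for x
  have ui: "u integrable_on {a..b}" and aui: "(\<lambda>s. \<bar>u s\<bar>) integrable_on {a..b}"
    using u by (auto simp: absolutely_integrable_on_def)
  have U_cont: "continuous_on {a..b} U"
    unfolding U_def by (rule indefinite_integral_continuous_1[OF ui])
  obtain s0 where "s0 \<in> {a..b}" and max: "\<And>s. s \<in> {a..b} \<Longrightarrow> exp (U s) \<le> exp (U s0)"
    using continuous_attains_sup[OF compact_Icc _ continuous_on_exp[OF U_cont]] x by auto
  define C where "C = exp (U s0)"
  have "exp (U x) - exp (U a) = integral {a..x} (\<lambda>s. u s * exp (U s))"
  proof (rule integral_eq_of_local_estimate[where w = "\<lambda>s. \<bar>u s\<bar>"])
    show "(\<lambda>s. u s * exp (U s)) integrable_on {a..x}"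
      using integrable_mult_continuous_subinterval[OF u continuous_on_exp[OF U_cont], of a x] x
      by (simp add: mult.commute)
    show "(\<lambda>s. \<bar>u s\<bar>) integrable_on {a..x}" using integrable_subinterval_real[OF aui] x by auto
    fix e :: real assume "e > 0"
    define \<eta> where "\<eta> = min 1 (e / (5 * C))"
    have "C > 0" "\<eta> > 0" using \<open>e > 0\<close> by (simp_all add: C_def \<eta>_def)
    then obtain \<delta> where "\<delta> > 0" and \<delta>: "\<And>p q. p \<in> {a..b} \<Longrightarrow> q \<in> {a..b} \<Longrightarrow> \<bar>q - p\<bar> < \<delta> \<Longrightarrow> \<bar>U q - U p\<bar> < \<eta>"
      using uniformly_continuous_on_Icc_real[OF U_cont] by blast
    have "\<bar>exp (U q) - exp (U p) - integral {p..q} (\<lambda>s. u s * exp (U s))\<bar> \<le> e * integral {p..q} (\<lambda>s. \<bar>u s\<bar>)"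
      if pq: "a \<le> p" "p \<le> q" "q \<le> x" "q - p < \<delta>" for p q
    proof -
      have "0 \<le> integral {p..q} (\<lambda>s. \<bar>u s\<bar>)"
        using integrable_subinterval_real[OF aui, of p q] pq x by (intro integral_nonneg) auto
      moreover have "exp (U p) * (5 * \<eta>) \<le> C * (5 * (e / (5 * C)))"
        using max[of p] pq x \<open>\<eta> > 0\<close> by (intro mult_mono) (auto simp: C_def \<eta>_def)
      ultimately have "exp (U p) * (5 * \<eta> * integral {p..q} (\<lambda>s. \<bar>u s\<bar>)) \<le> e * integral {p..q} (\<lambda>s. \<bar>u s\<bar>)"
        using \<open>C > 0\<close> by (simp add: mult.assoc[symmetric] mult_right_mono)
      moreover have "\<bar>exp (U q) - exp (U p) - integral {p..q} (\<lambda>s. u s * exp (U s))\<bar>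
          \<le> exp (U p) * (5 * \<eta> * integral {p..q} (\<lambda>s. \<bar>u s\<bar>))"
        unfolding U_def using pq x \<delta>[of p] \<open>\<eta> > 0\<close>
        by (intro exp_primitive_local_estimate[OF u]) (auto simp: U_def \<eta>_def less_imp_le)
      ultimately show ?thesis by linarith
    qed
    then show "\<exists>\<delta>>0. \<forall>p q. a \<le> p \<longrightarrow> p \<le> q \<longrightarrow> q \<le> x \<longrightarrow> q - p < \<delta> \<longrightarrow>
        \<bar>exp (U q) - exp (U p) - integral {p..q} (\<lambda>s. u s * exp (U s))\<bar> \<le> e * integral {p..q} (\<lambda>s. \<bar>u s\<bar>)"
      using \<open>\<delta> > 0\<close> by blast
  qed (use x in auto)
  then show ?thesis
    by (simp add: U_def)
qed

section \<open>Bessel's inequality for the sine system\<close>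

lemma bessel_inequality:
  fixes g :: "real \<Rightarrow> real" and \<phi> :: "'i \<Rightarrow> real \<Rightarrow> real"
  assumes g: "g absolutely_integrable_on {a..b}" and g2: "(\<lambda>s. (g s)\<^sup>2) integrable_on {a..b}"
    and \<phi>: "\<And>i. continuous_on {a..b} (\<phi> i)" and N: "finite N"
    and orthonormal: "\<And>i j. i \<in> N \<Longrightarrow> j \<in> N \<Longrightarrow>
      integral {a..b} (\<lambda>s. \<phi> i s * \<phi> j s) = (if i = j then 1 else 0)"
  shows "(\<Sum>i\<in>N. (integral {a..b} (\<lambda>s. g s * \<phi> i s))\<^sup>2) \<le> integral {a..b} (\<lambda>s. (g s)\<^sup>2)"
proof -
  define \<beta> where "\<beta> i = integral {a..b} (\<lambda>s. g s * \<phi> i s)" for i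
  define P where "P s = (\<Sum>i\<in>N. \<beta> i * \<phi> i s)" for s
  have g\<phi>: "(\<lambda>s. g s * \<phi> i s) integrable_on {a..b}" for i
    using integrable_mult_continuous_subinterval[OF g \<phi>, of a b i] by (simp add: mult.commute)
  have gP_eq: "g s * P s = (\<Sum>i\<in>N. \<beta> i * (g s * \<phi> i s))" for s
    unfolding P_def by (simp add: sum_distrib_left algebra_simps)
  have gP_i: "(\<lambda>s. g s * P s) integrable_on {a..b}"
    unfolding gP_eq by (intro integrable_sum integrable_on_mult_right g\<phi> N)
  have gP: "integral {a..b} (\<lambda>s. g s * P s) = (\<Sum>i\<in>N. \<beta> i * \<beta> i)"
    unfolding gP_eq by (subst integral_sum) (auto intro: N integrable_on_mult_right g\<phi> simp: \<beta>_def)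
  have PP_eq: "P s * P s = (\<Sum>i\<in>N. \<Sum>j\<in>N. \<beta> i * \<beta> j * (\<phi> i s * \<phi> j s))" for s
    unfolding P_def sum_product by (simp add: algebra_simps)
  have \<phi>\<phi>_i: "(\<lambda>s. \<beta> i * \<beta> j * (\<phi> i s * \<phi> j s)) integrable_on {a..b}" for i j
    by (intro integrable_continuous_real continuous_intros \<phi>)
  have PP_i: "(\<lambda>s. P s * P s) integrable_on {a..b}"
    unfolding PP_eq by (intro integrable_sum \<phi>\<phi>_i N)
  have PP: "integral {a..b} (\<lambda>s. P s * P s) = (\<Sum>i\<in>N. \<beta> i * \<beta> i)"
  proof -
    have "integral {a..b} (\<lambda>s. P s * P s)
        = (\<Sum>i\<in>N. \<Sum>j\<in>N. \<beta> i * \<beta> j * integral {a..b} (\<lambda>s. \<phi> i s * \<phi> j s))"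
      unfolding PP_eq by (simp add: integral_sum \<phi>\<phi>_i integrable_sum N)
    also have "\<dots> = (\<Sum>i\<in>N. \<beta> i * \<beta> i)"
      by (intro sum.cong refl) (simp add: orthonormal N if_distrib[of "\<lambda>x. _ * x"] cong: if_cong)
    finally show ?thesis .
  qed
  have sq: "(\<lambda>s. (g s - P s)\<^sup>2) = (\<lambda>s. ((g s)\<^sup>2 - 2 * (g s * P s)) + P s * P s)"
    by (simp add: fun_eq_iff power2_eq_square algebra_simps)
  have diff_i: "(\<lambda>s. (g s)\<^sup>2 - 2 * (g s * P s)) integrable_on {a..b}"
    by (intro integrable_diff g2 integrable_on_mult_right gP_i)
  have "0 \<le> integral {a..b} (\<lambda>s. (g s - P s)\<^sup>2)"
    by (rule integral_nonneg) (simp_all add: sq integrable_add[OF diff_i PP_i])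
  also have "\<dots> = integral {a..b} (\<lambda>s. (g s)\<^sup>2) - (\<Sum>i\<in>N. \<beta> i * \<beta> i)"
    unfolding sq integral_add[OF diff_i PP_i] integral_diff[OF g2 integrable_on_mult_right[OF gP_i]]
    by (simp add: gP PP)
  finally show ?thesis by (simp add: \<beta>_def power2_eq_square)
qed

lemma integral_cos_int_pi:
  fixes k :: int
  shows "integral {0..1} (\<lambda>s. cos (of_int k * pi * s)) = (if k = 0 then 1 else 0)"
proof (cases "k = 0")
  case False
  then have "of_int k * pi \<noteq> 0" by simp
  have "((\<lambda>s. cos (of_int k * pi * s)) has_integral
        sin (of_int k * pi * 1) / (of_int k * pi) - sin (of_int k * pi * 0) / (of_int k * pi)) {0..1}"
  proof (rule fundamental_theorem_of_calculus)
    fix s :: real assume "s \<in> {0..1}"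
    show "((\<lambda>s. sin (of_int k * pi * s) / (of_int k * pi)) has_vector_derivative cos (of_int k * pi * s))
        (at s within {0..1})"
      using \<open>of_int k * pi \<noteq> 0\<close>
      by (auto intro!: derivative_eq_intros simp: has_real_derivative_iff_has_vector_derivative[symmetric])
  qed simp
  moreover have "sin (of_int k * pi * 1) = 0"
    using sin_npi_int[of k] by (simp add: mult.commute)
  ultimately show ?thesis using False by (simp add: integral_unique)
qed simp

lemma sine_orthonormal:
  fixes n m :: nat
  assumes "n \<ge> 1" "m \<ge> 1"
  shows "integral {0..1} (\<lambda>s. (sqrt 2 * sin (real n * pi * s)) * (sqrt 2 * sin (real m * pi * s)))
    = (if n = m then 1 else 0)"
proof -
  have "(sqrt 2 * sin (real n * pi * s)) * (sqrt 2 * sin (real m * pi * s))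
      = cos (of_int (int n - int m) * pi * s) - cos (of_int (int n + int m) * pi * s)" for s
  proof -
    have "(sqrt 2 * sin (real n * pi * s)) * (sqrt 2 * sin (real m * pi * s))
        = 2 * (sin (real n * pi * s) * sin (real m * pi * s))"
      by simp
    also have "\<dots> = cos (real n * pi * s - real m * pi * s) - cos (real n * pi * s + real m * pi * s)"
      unfolding sin_times_sin by simp
    also have "real n * pi * s - real m * pi * s = of_int (int n - int m) * pi * s"
      by (simp add: algebra_simps)
    also have "real n * pi * s + real m * pi * s = of_int (int n + int m) * pi * s"
      by (simp add: algebra_simps)
    finally show ?thesis .
  qed
  then have "integral {0..1} (\<lambda>s. (sqrt 2 * sin (real n * pi * s)) * (sqrt 2 * sin (real m * pi * s)))
      = integral {0..1} (\<lambda>s. cos (of_int (int n - int m) * pi * s))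
        - integral {0..1} (\<lambda>s. cos (of_int (int n + int m) * pi * s))"
    by (simp add: integral_diff integrable_continuous_real continuous_intros)
  then show ?thesis
    unfolding integral_cos_int_pi using assms by auto
qed

section \<open>The Cole--Hopf transform of a square-integrable datum\<close>

lemma absolutely_integrable_if_set_integrable_lborel:
  fixes f :: "real \<Rightarrow> real"
  assumes "set_integrable lborel S f"
  shows "f absolutely_integrable_on S"
proof -
  have int: "integrable lborel (\<lambda>x. indicator S x *\<^sub>R f x)"
    using assms unfolding set_integrable_def .
  then have "(\<lambda>x. indicator S x *\<^sub>R f x) \<in> borel_measurable lborel"
    by (rule borel_measurable_integrable)
  from integrable_completion[OF this] int show ?thesis
    unfolding set_integrable_def by simp
qed

lemma set_integrable_if_set_integrable_square:
  fixes u :: "real \<Rightarrow> real"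
  assumes meas: "u \<in> borel_measurable lborel" and L2: "set_integrable lborel {a..b} (\<lambda>s. (u s)\<^sup>2)"
  shows "set_integrable lborel {a..b} u"
  unfolding set_integrable_def
proof (rule Bochner_Integration.integrable_bound)
  have "set_integrable lborel {a..b} (\<lambda>s. 1 + (u s)\<^sup>2)"
    by (rule set_integral_add(1)[OF _ L2]) (intro borel_integrable_atLeastAtMost' continuous_intros)
  then show "integrable lborel (\<lambda>x. indicator {a..b} x *\<^sub>R (1 + (u x)\<^sup>2))"
    unfolding set_integrable_def .
  show "(\<lambda>x. indicator {a..b} x *\<^sub>R u x) \<in> borel_measurable lborel"
    using meas by measurable
  have "\<bar>x\<bar> \<le> 1 + x\<^sup>2" for x :: real
  proof (cases "\<bar>x\<bar> \<le> 1")
    case True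
    then show ?thesis using zero_le_power2[of x] by linarith
  next
    case False
    then have "\<bar>x\<bar> * 1 \<le> \<bar>x\<bar> * \<bar>x\<bar>" by (intro mult_left_mono) auto
    then show ?thesis by (simp add: power2_eq_square abs_mult_self_eq)
  qed
  then show "AE x in lborel. norm (indicator {a..b} x *\<^sub>R u x) \<le> norm (indicator {a..b} x *\<^sub>R (1 + (u x)\<^sup>2))"
    by (auto simp: indicator_def)
qed

lemma integral_abs_le_sqrt_integral_square:
  fixes u :: "real \<Rightarrow> real"
  assumes u: "(\<lambda>s. \<bar>u s\<bar>) integrable_on {0..1}" and u2: "(\<lambda>s. (u s)\<^sup>2) integrable_on {0..1}"
  shows "integral {0..1} (\<lambda>s. \<bar>u s\<bar>) \<le> sqrt (integral {0..1} (\<lambda>s. (u s)\<^sup>2))"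
proof (rule real_le_rsqrt)
  define c where "c = integral {0..1} (\<lambda>s. \<bar>u s\<bar>)"
  have sq: "(\<lambda>s. (\<bar>u s\<bar> - c)\<^sup>2) = (\<lambda>s. ((u s)\<^sup>2 - 2 * c * \<bar>u s\<bar>) + c\<^sup>2)"
    by (simp add: fun_eq_iff power2_eq_square algebra_simps)
  have i: "(\<lambda>s. (u s)\<^sup>2 - 2 * c * \<bar>u s\<bar>) integrable_on {0..1}"
    by (intro integrable_diff u2 integrable_on_mult_right u)
  have i2: "(\<lambda>s. ((u s)\<^sup>2 - 2 * c * \<bar>u s\<bar>) + c\<^sup>2) integrable_on {0..1}"
    by (intro integrable_add i integrable_continuous_real continuous_on_const)
  have "0 \<le> integral {0..1} (\<lambda>s. (\<bar>u s\<bar> - c)\<^sup>2)"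
    by (rule integral_nonneg) (simp_all only: sq i2 zero_le_power2)
  also have "\<dots> = integral {0..1} (\<lambda>s. (u s)\<^sup>2) - c\<^sup>2"
    unfolding sq integral_add[OF i integrable_continuous_real[OF continuous_on_const]]
      integral_diff[OF u2 integrable_on_mult_right[OF u]]
    by (simp add: c_def power2_eq_square)
  finally show "c\<^sup>2 \<le> integral {0..1} (\<lambda>s. (u s)\<^sup>2)" by simp
qed

definition ColeHopf_weight :: "(real \<Rightarrow> real) \<Rightarrow> real \<Rightarrow> real" where
  "ColeHopf_weight u x = exp (- (1/2) * integral {0..x} u)"

lemma
  fixes u :: "real \<Rightarrow> real"
  assumes u: "u absolutely_integrable_on {0..1}"
  defines "N \<equiv> integral {0..1} (\<lambda>s. \<bar>u s\<bar>)"
  shows ColeHopf_weight_continuous: "continuous_on {0..1} (ColeHopf_weight u)"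
    and ColeHopf_weight_bounds: "x \<in> {0..1} \<Longrightarrow>
      exp (- N / 2) \<le> ColeHopf_weight u x \<and> ColeHopf_weight u x \<le> exp (N / 2)"
    and integral_ColeHopf_weight_ge: "exp (- N / 2) \<le> integral {0..1} (ColeHopf_weight u)"
    and ColeHopf_weight_integral_equation: "x \<in> {0..1} \<Longrightarrow>
      ColeHopf_weight u x = 1 + integral {0..x} (\<lambda>s. - (1/2) * ColeHopf_weight u s * u s)"
proof -
  have ui: "u integrable_on {0..1}" and aui: "(\<lambda>s. \<bar>u s\<bar>) integrable_on {0..1}"
    using u by (auto simp: absolutely_integrable_on_def)
  show cont: "continuous_on {0..1} (ColeHopf_weight u)"
    unfolding ColeHopf_weight_def by (intro continuous_intros indefinite_integral_continuous_1 ui)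
  have bounds: "exp (- N / 2) \<le> ColeHopf_weight u x \<and> ColeHopf_weight u x \<le> exp (N / 2)"
    if x: "x \<in> {0..1}" for x
  proof -
    have "\<bar>integral {0..x} u\<bar> \<le> integral {0..x} (\<lambda>s. \<bar>u s\<bar>)"
      using integral_norm_bound_integral[of u "{0..x}" "\<lambda>s. \<bar>u s\<bar>"] x
        integrable_subinterval_real[OF ui, of 0 x] integrable_subinterval_real[OF aui, of 0 x] by auto
    also have "\<dots> \<le> N"
      unfolding N_def using x integrable_subinterval_real[OF aui, of 0 x] aui by (intro integral_subset_le) auto
    finally show ?thesis
      unfolding ColeHopf_weight_def by auto
  qed
  then show "x \<in> {0..1} \<Longrightarrow> exp (- N / 2) \<le> ColeHopf_weight u x \<and> ColeHopf_weight u x \<le> exp (N / 2)"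
    by blast
  show "exp (- N / 2) \<le> integral {0..1} (ColeHopf_weight u)"
    using integral_le[OF integrable_continuous_real[OF continuous_on_const] integrable_continuous_real[OF cont]]
      bounds by simp
  have v: "(\<lambda>s. - (1/2) * u s) absolutely_integrable_on {0..1}"
    using absolutely_integrable_mult_continuous[OF u, of "\<lambda>_. - (1/2)"] by simp
  show "ColeHopf_weight u x = 1 + integral {0..x} (\<lambda>s. - (1/2) * ColeHopf_weight u s * u s)"
    if "x \<in> {0..1}"
    using exp_indefinite_integral[OF v that] by (simp add: ColeHopf_weight_def mult_ac)
qed

lemma ColeHopf_H_eq_weight:
  fixes u :: "real \<Rightarrow> real"
  assumes u: "set_integrable lborel {0..1} u" and x: "x \<in> {0..1}"
  shows "ColeHopf_H u x = ColeHopf_weight u x / integral {0..1} (ColeHopf_weight u)"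
proof -
  have LINT_eq: "(LINT s:{0..y}|lborel. u s) = integral {0..y} u" if "y \<in> {0..1}" for y
    using that by (intro set_borel_integral_eq_integral(2) set_integrable_subset[OF u]) auto
  note cont = ColeHopf_weight_continuous[OF absolutely_integrable_if_set_integrable_lborel[OF u]]
  have "(LINT y:{0..1}|lborel. exp (- (1/2) * (LINT s:{0..y}|lborel. u s)))
      = (LINT y:{0..1}|lborel. ColeHopf_weight u y)"
    by (rule set_lebesgue_integral_cong) (auto simp: LINT_eq ColeHopf_weight_def)
  also have "\<dots> = integral {0..1} (ColeHopf_weight u)"
    by (rule set_borel_integral_eq_integral(2)[OF borel_integrable_atLeastAtMost'[OF cont]])
  finally show ?thesis
    unfolding ColeHopf_H_def using LINT_eq[OF x] by (simp add: ColeHopf_weight_def)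
qed

lemma
  fixes u :: "real \<Rightarrow> real"
  assumes u: "set_integrable lborel {0..1} u"
  shows ColeHopf_H_continuous: "continuous_on {0..1} (ColeHopf_H u)"
    and ColeHopf_H_bounds: "x \<in> {0..1} \<Longrightarrow>
      0 < ColeHopf_H u x \<and> ColeHopf_H u x \<le> exp (integral {0..1} (\<lambda>s. \<bar>u s\<bar>))"
    and ColeHopf_H_integral_equation: "x \<in> {0..1} \<Longrightarrow>
      ColeHopf_H u x = ColeHopf_H u 0 + integral {0..x} (\<lambda>s. - (1/2) * ColeHopf_H u s * u s)"
proof -
  have ui: "u absolutely_integrable_on {0..1}"
    by (rule absolutely_integrable_if_set_integrable_lborel[OF u])
  define Z where "Z = integral {0..1} (ColeHopf_weight u)"
  define N where "N = integral {0..1} (\<lambda>s. \<bar>u s\<bar>)"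
  have H: "ColeHopf_H u x = ColeHopf_weight u x / Z" if "x \<in> {0..1}" for x
    using ColeHopf_H_eq_weight[OF u that] by (simp add: Z_def)
  have Z_ge: "exp (- N / 2) \<le> Z"
    using integral_ColeHopf_weight_ge[OF ui] by (simp add: Z_def N_def)
  then have "Z > 0"
    using exp_gt_zero[of "- N / 2"] by linarith
  show "continuous_on {0..1} (ColeHopf_H u)"
  proof (rule continuous_on_eq)
    show "continuous_on {0..1} (\<lambda>x. ColeHopf_weight u x / Z)"
      using \<open>Z > 0\<close> by (intro continuous_intros ColeHopf_weight_continuous[OF ui]) auto
  qed (use H in simp)
  assume x: "x \<in> {0..1}"
  have "ColeHopf_weight u x / Z \<le> exp (N / 2) / exp (- N / 2)"
    using ColeHopf_weight_bounds[OF ui x] Z_ge by (intro frac_le) (auto simp: N_def)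
  then show "0 < ColeHopf_H u x \<and> ColeHopf_H u x \<le> exp (integral {0..1} (\<lambda>s. \<bar>u s\<bar>))"
    using H[OF x] \<open>Z > 0\<close> by (simp add: N_def ColeHopf_weight_def exp_diff[symmetric])
  have "integral {0..x} (\<lambda>s. - (1/2) * ColeHopf_H u s * u s)
      = integral {0..x} (\<lambda>s. (1 / Z) * (- (1/2) * ColeHopf_weight u s * u s))"
    by (rule integral_cong) (use x H in auto)
  moreover have "ColeHopf_H u x = 1 / Z + integral {0..x} (\<lambda>s. - (1/2) * ColeHopf_weight u s * u s) / Z"
    using H[OF x] ColeHopf_weight_integral_equation[OF ui x] \<open>Z > 0\<close> by (simp add: field_simps)
  ultimately show "ColeHopf_H u x = ColeHopf_H u 0 + integral {0..x} (\<lambda>s. - (1/2) * ColeHopf_H u s * u s)"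
    using H[of 0] by (simp add: ColeHopf_weight_def)
qed

lemma l_coef_eq_integral:
  fixes u :: "real \<Rightarrow> real"
  assumes u: "set_integrable lborel {0..1} u"
  shows "l_coef n u = integral {0..1} (\<lambda>s. ColeHopf_H u s * e_cos n s)"
  unfolding l_coef_def coef_def e_cos_def
  by (intro set_borel_integral_eq_integral(2) borel_integrable_atLeastAtMost' continuous_intros
      ColeHopf_H_continuous[OF u])

lemma sqrt2_sin_indefinite_integral:
  fixes c x :: real
  assumes "0 \<le> x"
  shows "sqrt 2 * sin (c * x) = sqrt 2 * sin (c * 0) + integral {0..x} (\<lambda>s. sqrt 2 * c * cos (c * s))"
proof -
  have "((\<lambda>s. sqrt 2 * c * cos (c * s)) has_integral sqrt 2 * sin (c * x) - sqrt 2 * sin (c * 0)) {0..x}"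
  proof (rule fundamental_theorem_of_calculus[OF assms])
    fix s assume "s \<in> {0..x}"
    show "((\<lambda>s. sqrt 2 * sin (c * s)) has_vector_derivative sqrt 2 * c * cos (c * s)) (at s within {0..x})"
      by (auto intro!: derivative_eq_intros simp: has_real_derivative_iff_has_vector_derivative[symmetric])
  qed
  then show ?thesis by (subst integral_unique) simp_all
qed

lemma l_coef_eq_sine_coefficient:
  fixes u :: "real \<Rightarrow> real"
  assumes u: "set_integrable lborel {0..1} u" and n: "n \<ge> 1"
  shows "real n * pi * l_coef n u
    = integral {0..1} (\<lambda>s. ColeHopf_H u s / 2 * u s * (sqrt 2 * sin (real n * pi * s)))"
proof -
  define c where "c = real n * pi"
  let ?H = "ColeHopf_H u"
  let ?A = "\<lambda>s. - (1/2) * ?H s * u s * (sqrt 2 * sin (c * s))"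
  let ?B = "\<lambda>s. ?H s * (sqrt 2 * c * cos (c * s))"
  have ui: "u absolutely_integrable_on {0..1}"
    by (rule absolutely_integrable_if_set_integrable_lborel[OF u])
  have H_cont: "continuous_on {0..1} ?H"
    by (rule ColeHopf_H_continuous[OF u])
  have parts: "?H 1 * (sqrt 2 * sin (c * 1)) - ?H 0 * (sqrt 2 * sin (c * 0)) = integral {0..1} (\<lambda>s. ?A s + ?B s)"
  proof (rule integral_product_rule)
    show "(\<lambda>s. - (1/2) * ?H s * u s) absolutely_integrable_on {0..1}"
      by (intro absolutely_integrable_mult_continuous ui continuous_intros H_cont)
    show "(\<lambda>s. sqrt 2 * c * cos (c * s)) absolutely_integrable_on {0..1}"
      by (intro absolutely_integrable_continuous_real continuous_intros)
    show "\<forall>x\<in>{0..1}. ?H x = ?H 0 + integral {0..x} (\<lambda>s. - (1/2) * ?H s * u s)"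
      using ColeHopf_H_integral_equation[OF u] by blast
    show "\<forall>x\<in>{0..1}. sqrt 2 * sin (c * x) = sqrt 2 * sin (c * 0) + integral {0..x} (\<lambda>s. sqrt 2 * c * cos (c * s))"
      by (intro ballI sqrt2_sin_indefinite_integral) simp
  qed simp
  have "(\<lambda>s. (- (1/2) * ?H s * (sqrt 2 * sin (c * s))) * u s) integrable_on {0..1}"
    by (rule set_lebesgue_integral_eq_integral(1))
      (intro absolutely_integrable_mult_continuous ui continuous_intros H_cont)
  then have A_i: "?A integrable_on {0..1}"
    by (simp add: mult_ac)
  have B_i: "?B integrable_on {0..1}"
    by (intro integrable_continuous_real continuous_intros H_cont)
  have "sin (c * 1) = 0"
    by (simp add: c_def)
  with parts integral_add[OF A_i B_i] have "integral {0..1} ?B = - integral {0..1} ?A"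
    by simp
  also have "\<dots> = integral {0..1} (\<lambda>s. ?H s / 2 * u s * (sqrt 2 * sin (c * s)))"
    unfolding integral_neg[symmetric] by (rule integral_cong) simp
  finally show ?thesis
    unfolding l_coef_eq_integral[OF u] e_cos_def using n by (simp add: c_def mult_ac)
qed

lemma sum_inverse_squares_le:
  fixes F :: "nat set"
  assumes "finite F" "0 \<notin> F"
  shows "(\<Sum>n\<in>F. 1 / (real n)\<^sup>2) \<le> pi\<^sup>2 / 6"
proof -
  have "0 < n" if "n \<in> F" for n
    using that assms(2) by (metis gr0I)
  with assms(1) have "F \<subseteq> {Suc 0..Max F}"
    by (auto simp: Suc_le_eq)
  then have "(\<Sum>n\<in>F. 1 / (real n)\<^sup>2) \<le> (\<Sum>n\<in>{Suc 0..Max F}. 1 / (real n)\<^sup>2)"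
    by (intro sum_mono2) auto
  also have "\<dots> = (\<Sum>m<Max F. 1 / (real m + 1)\<^sup>2)"
    by (simp add: sum.atLeast1_atMost_eq add.commute)
  also have "\<dots> \<le> (\<Sum>m. 1 / (real m + 1)\<^sup>2)"
    using inverse_squares_sums by (intro sum_le_suminf) (auto simp: sums_iff add.commute)
  also have "\<dots> = pi\<^sup>2 / 6"
    using inverse_squares_sums by (simp add: sums_iff add.commute)
  finally show ?thesis .
qed

lemma L2norm01_eq_sqrt_integral:
  assumes "set_integrable lborel {0..1} (\<lambda>s. (u s)\<^sup>2)"
  shows "L2norm01 u = sqrt (integral {0..1} (\<lambda>s. (u s)\<^sup>2))"
  using set_borel_integral_eq_integral(2)[OF assms] by (simp add: L2norm01_def)

lemma
  fixes u :: "real \<Rightarrow> real"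
  assumes meas: "u \<in> borel_measurable lborel" and L2: "set_integrable lborel {0..1} (\<lambda>s. (u s)\<^sup>2)"
  shows half_ColeHopf_H_mult_absolutely_integrable:
      "(\<lambda>s. ColeHopf_H u s / 2 * u s) absolutely_integrable_on {0..1}"
    and half_ColeHopf_H_mult_square_integrable:
      "(\<lambda>s. (ColeHopf_H u s / 2 * u s)\<^sup>2) integrable_on {0..1}"
    and half_ColeHopf_H_mult_square_integral_le:
      "integral {0..1} (\<lambda>s. (ColeHopf_H u s / 2 * u s)\<^sup>2) \<le> (exp (L2norm01 u) * L2norm01 u)\<^sup>2 / 4"
proof -
  let ?H = "ColeHopf_H u"
  define L where "L = L2norm01 u"
  have u: "set_integrable lborel {0..1} u"
    by (rule set_integrable_if_set_integrable_square[OF meas L2])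
  have ui: "u absolutely_integrable_on {0..1}" and u2i: "(\<lambda>s. (u s)\<^sup>2) absolutely_integrable_on {0..1}"
    using absolutely_integrable_if_set_integrable_lborel u L2 by blast+
  have H_cont: "continuous_on {0..1} ?H"
    by (rule ColeHopf_H_continuous[OF u])
  have square_eq: "(?H s / 2 * u s)\<^sup>2 = (?H s / 2)\<^sup>2 * (u s)\<^sup>2" for s
    by (rule power_mult_distrib)
  show "(\<lambda>s. ?H s / 2 * u s) absolutely_integrable_on {0..1}"
    by (intro absolutely_integrable_mult_continuous ui continuous_intros H_cont) auto
  show square_i: "(\<lambda>s. (?H s / 2 * u s)\<^sup>2) integrable_on {0..1}"
    unfolding square_eq by (rule set_lebesgue_integral_eq_integral(1))
      (intro absolutely_integrable_mult_continuous u2i continuous_intros H_cont, auto)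
  have "integral {0..1} (\<lambda>s. \<bar>u s\<bar>) \<le> L"
    unfolding L_def L2norm01_eq_sqrt_integral[OF L2] using ui u2i unfolding absolutely_integrable_on_def
    by (intro integral_abs_le_sqrt_integral_square) simp_all
  then have H_le: "0 \<le> ?H s \<and> ?H s \<le> exp L" if "s \<in> {0..1}" for s
    using ColeHopf_H_bounds[OF u that] exp_le_cancel_iff[of _ L] by (meson less_imp_le order_trans)
  have "integral {0..1} (\<lambda>s. (?H s / 2 * u s)\<^sup>2) \<le> integral {0..1} (\<lambda>s. (exp L / 2)\<^sup>2 * (u s)\<^sup>2)"
  proof (rule integral_le[OF square_i])
    show "(\<lambda>s. (exp L / 2)\<^sup>2 * (u s)\<^sup>2) integrable_on {0..1}"
      by (intro integrable_on_mult_right set_lebesgue_integral_eq_integral(1)[OF u2i])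
    fix s :: real assume "s \<in> {0..1}"
    then have "(?H s / 2)\<^sup>2 \<le> (exp L / 2)\<^sup>2"
      using H_le by (intro power_mono) auto
    then show "(?H s / 2 * u s)\<^sup>2 \<le> (exp L / 2)\<^sup>2 * (u s)\<^sup>2"
      unfolding square_eq by (rule mult_right_mono) simp
  qed
  also have "\<dots> = (exp L * L)\<^sup>2 / 4"
    using integral_nonneg[OF set_lebesgue_integral_eq_integral(1)[OF u2i]]
    by (simp add: L_def L2norm01_eq_sqrt_integral[OF L2] power_mult_distrib power_divide)
  finally show "integral {0..1} (\<lambda>s. (?H s / 2 * u s)\<^sup>2) \<le> (exp (L2norm01 u) * L2norm01 u)\<^sup>2 / 4"
    by (simp add: L_def)
qed

lemma sum_square_scaled_l_coef_le:
  fixes u :: "real \<Rightarrow> real"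
  assumes meas: "u \<in> borel_measurable lborel" and L2: "set_integrable lborel {0..1} (\<lambda>s. (u s)\<^sup>2)"
    and F: "finite F" "0 \<notin> F"
  shows "(\<Sum>n\<in>F. (real n * pi * l_coef n u)\<^sup>2) \<le> (exp (L2norm01 u) * L2norm01 u)\<^sup>2 / 4"
proof -
  let ?\<gamma> = "\<lambda>s. ColeHopf_H u s / 2 * u s"
  have F_pos: "n \<ge> 1" if "n \<in> F" for n
    using that F(2) by (cases n) auto
  have u: "set_integrable lborel {0..1} u"
    by (rule set_integrable_if_set_integrable_square[OF meas L2])
  have "(\<Sum>n\<in>F. (real n * pi * l_coef n u)\<^sup>2)
      = (\<Sum>n\<in>F. (integral {0..1} (\<lambda>s. ?\<gamma> s * (sqrt 2 * sin (real n * pi * s))))\<^sup>2)"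
  proof (rule sum.cong[OF refl])
    fix n assume "n \<in> F"
    then show "(real n * pi * l_coef n u)\<^sup>2 = (integral {0..1} (\<lambda>s. ?\<gamma> s * (sqrt 2 * sin (real n * pi * s))))\<^sup>2"
      by (simp only: l_coef_eq_sine_coefficient[OF u F_pos])
  qed
  also have "\<dots> \<le> integral {0..1} (\<lambda>s. (?\<gamma> s)\<^sup>2)"
  proof (rule bessel_inequality[OF half_ColeHopf_H_mult_absolutely_integrable[OF meas L2]
        half_ColeHopf_H_mult_square_integrable[OF meas L2] _ F(1)])
    show "continuous_on {0..1} (\<lambda>s. sqrt 2 * sin (real n * pi * s))" for n
      by (intro continuous_intros)
    show "integral {0..1} (\<lambda>s. sqrt 2 * sin (real i * pi * s) * (sqrt 2 * sin (real j * pi * s)))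
        = (if i = j then 1 else 0)" if "i \<in> F" "j \<in> F" for i j
      using F_pos[OF that(1)] F_pos[OF that(2)] by (rule sine_orthonormal)
  qed
  also have "\<dots> \<le> (exp (L2norm01 u) * L2norm01 u)\<^sup>2 / 4"
    by (rule half_ColeHopf_H_mult_square_integral_le[OF meas L2])
  finally show ?thesis .
qed

lemma sum_abs_l_coef_le:
  fixes u :: "real \<Rightarrow> real"
  assumes meas: "u \<in> borel_measurable lborel" and L2: "set_integrable lborel {0..1} (\<lambda>s. (u s)\<^sup>2)"
    and small: "2 * exp (L2norm01 u) * L2norm01 u < 1"
    and F: "finite F" "0 \<notin> F"
  shows "(\<Sum>n\<in>F. sqrt 2 * \<bar>l_coef n u\<bar>) \<le> 1 / 2"
proof -
  define L where "L = L2norm01 u"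
  have "0 \<le> L"
    unfolding L_def L2norm01_def set_lebesgue_integral_def
    by (intro real_sqrt_ge_zero Bochner_Integration.integral_nonneg) (simp add: indicator_def)
  have "(exp L * L)\<^sup>2 \<le> (1 / 2)\<^sup>2"
    using small \<open>0 \<le> L\<close> by (intro power_mono) (auto simp: L_def)
  have AM_GM: "sqrt 2 * \<bar>l_coef n u\<bar> \<le> ((real n * pi * l_coef n u)\<^sup>2 + 2 * (1 / (real n)\<^sup>2) / pi\<^sup>2) / 2"
    if "n \<in> F" for n
  proof -
    have "n > 0" using that F(2) by (auto intro: gr0I)
    define a where "a = \<bar>real n * pi * l_coef n u\<bar>"
    define b where "b = sqrt 2 / (real n * pi)"
    have "sqrt 2 * \<bar>l_coef n u\<bar> = a * b"
      using \<open>n > 0\<close> by (simp add: a_def b_def abs_mult)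
    also have "\<dots> \<le> (a\<^sup>2 + b\<^sup>2) / 2"
      using sum_squares_bound[of a b] by simp
    also have "a\<^sup>2 + b\<^sup>2 = (real n * pi * l_coef n u)\<^sup>2 + 2 * (1 / (real n)\<^sup>2) / pi\<^sup>2"
      by (simp add: a_def b_def power_divide power_mult_distrib)
    finally show ?thesis .
  qed
  have "(\<Sum>n\<in>F. sqrt 2 * \<bar>l_coef n u\<bar>)
      \<le> ((\<Sum>n\<in>F. (real n * pi * l_coef n u)\<^sup>2) + 2 * (\<Sum>n\<in>F. 1 / (real n)\<^sup>2) / pi\<^sup>2) / 2"
    using sum_mono[OF AM_GM]
    by (simp only: sum_divide_distrib[symmetric] sum.distrib sum_distrib_left[symmetric])
  also have "\<dots> \<le> ((exp L * L)\<^sup>2 / 4 + 2 * (pi\<^sup>2 / 6) / pi\<^sup>2) / 2"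
    using sum_square_scaled_l_coef_le[OF meas L2 F] sum_inverse_squares_le[OF F]
    by (intro divide_right_mono add_mono mult_left_mono) (auto simp: L_def)
  also have "\<dots> \<le> 1 / 2"
  proof -
    have "2 * (pi\<^sup>2 / 6) / pi\<^sup>2 = 1 / 3" by simp
    then show ?thesis
      using \<open>(exp L * L)\<^sup>2 \<le> (1 / 2)\<^sup>2\<close> by (simp add: power_divide)
  qed
  finally show ?thesis .
qed

lemma l_coef_abs_summable:
  fixes u :: "real \<Rightarrow> real"
  assumes meas: "u \<in> borel_measurable lborel" and L2: "set_integrable lborel {0..1} (\<lambda>s. (u s)\<^sup>2)"
    and small: "2 * exp (L2norm01 u) * L2norm01 u < 1"
  shows "(\<lambda>k. sqrt 2 * \<bar>l_coef k u\<bar>) summable_on {0<..}"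
    and "(\<Sum>\<^sub>\<infinity>k\<in>{0<..}. sqrt 2 * \<bar>l_coef k u\<bar>) \<le> 1 / 2"
proof -
  have partial: "(\<Sum>k\<in>F. sqrt 2 * \<bar>l_coef k u\<bar>) \<le> 1 / 2" if "finite F" "F \<subseteq> {0<..}" for F
    using sum_abs_l_coef_le[OF meas L2 small] that by auto
  show summable: "(\<lambda>k. sqrt 2 * \<bar>l_coef k u\<bar>) summable_on {0<..}"
    using partial by (intro nonneg_bdd_above_summable_on bdd_aboveI[where M = "1 / 2"]) auto
  show "(\<Sum>\<^sub>\<infinity>k\<in>{0<..}. sqrt 2 * \<bar>l_coef k u\<bar>) \<le> 1 / 2"
    using partial by (rule infsum_le_finite_sums[OF summable])
qed

section \<open>The heat flow and the Burgers quotient\<close>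

definition heat_mode :: "real \<Rightarrow> (real \<Rightarrow> real) \<Rightarrow> nat \<Rightarrow> real \<Rightarrow> real" where
  "heat_mode t v0 k x = exp (- ((real k)\<^sup>2 * pi\<^sup>2 * t)) * coef k v0 * e_cos k x"

definition heat_mode_dx :: "real \<Rightarrow> (real \<Rightarrow> real) \<Rightarrow> nat \<Rightarrow> real \<Rightarrow> real" where
  "heat_mode_dx t v0 k x =
     - exp (- ((real k)\<^sup>2 * pi\<^sup>2 * t)) * coef k v0 * sqrt 2 * (real k * pi) * sin (real k * pi * x)"

lemma heat_mode_has_derivative:
  "(heat_mode t v0 k has_real_derivative heat_mode_dx t v0 k x) (at x)"
  unfolding heat_mode_def heat_mode_dx_def e_cos_def
  by (auto intro!: derivative_eq_intros simp: algebra_simps)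

lemma abs_heat_mode_le:
  "\<bar>heat_mode t v0 k x\<bar> \<le> sqrt 2 * exp (- ((real k)\<^sup>2 * pi\<^sup>2 * t)) * \<bar>coef k v0\<bar>"
proof -
  have "\<bar>heat_mode t v0 k x\<bar> = sqrt 2 * exp (- ((real k)\<^sup>2 * pi\<^sup>2 * t)) * \<bar>coef k v0\<bar> * \<bar>cos (real k * pi * x)\<bar>"
    by (simp add: heat_mode_def e_cos_def abs_mult)
  also have "\<dots> \<le> sqrt 2 * exp (- ((real k)\<^sup>2 * pi\<^sup>2 * t)) * \<bar>coef k v0\<bar> * 1"
    by (intro mult_left_mono) auto
  finally show ?thesis by simp
qed

lemma abs_heat_mode_dx_le:
  "\<bar>heat_mode_dx t v0 k x\<bar> \<le> sqrt 2 * pi * (real k * exp (- ((real k)\<^sup>2 * pi\<^sup>2 * t))) * \<bar>coef k v0\<bar>"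
proof -
  have "\<bar>heat_mode_dx t v0 k x\<bar>
      = sqrt 2 * pi * (real k * exp (- ((real k)\<^sup>2 * pi\<^sup>2 * t))) * \<bar>coef k v0\<bar> * \<bar>sin (real k * pi * x)\<bar>"
    by (simp add: heat_mode_dx_def abs_mult)
  also have "\<dots> \<le> sqrt 2 * pi * (real k * exp (- ((real k)\<^sup>2 * pi\<^sup>2 * t))) * \<bar>coef k v0\<bar> * 1"
    by (intro mult_left_mono) auto
  finally show ?thesis by simp
qed

lemma summable_nat_mult_exp_neg_square:
  fixes c :: real
  assumes "c > 0"
  shows "summable (\<lambda>n. real n * exp (- ((real n)\<^sup>2 * c)))"
proof (rule summable_comparison_test[OF _ summable_mult[OF summable_geometric[of "exp (- c / 2)"]]])
  show "norm (exp (- c / 2)) < 1" using assms by simp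
  have "real n * exp (- ((real n)\<^sup>2 * c)) \<le> 2 / c * exp (- c / 2) ^ n" for n
  proof -
    have "c / 2 * real n \<le> exp (c / 2 * real n)"
      using exp_ge_add_one_self[of "c / 2 * real n"] by linarith
    then have "real n \<le> 2 / c * exp (c / 2 * real n)"
      using assms by (simp add: field_simps)
    moreover have "exp (- ((real n)\<^sup>2 * c)) \<le> exp (- (c * real n))"
      using assms by (cases n) (auto simp: power2_eq_square)
    ultimately have "real n * exp (- ((real n)\<^sup>2 * c)) \<le> 2 / c * exp (c / 2 * real n) * exp (- (c * real n))"
      using assms by (intro mult_mono) auto
    also have "\<dots> = 2 / c * exp (- c / 2) ^ n"
      by (simp add: exp_add[symmetric] exp_of_nat_mult[symmetric] algebra_simps)
    finally show ?thesis .
  qed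
  then show "\<exists>N. \<forall>n\<ge>N. norm (real n * exp (- ((real n)\<^sup>2 * c))) \<le> 2 / c * exp (- c / 2) ^ n"
    by auto
qed

lemma has_sum_greaterThan_0_Suc:
  fixes f :: "nat \<Rightarrow> real"
  assumes "summable (\<lambda>m. norm (f (Suc m)))"
  shows "(f has_sum (\<Sum>m. f (Suc m))) {0<..}"
proof -
  have "((\<lambda>m. f (Suc m)) has_sum (\<Sum>m. f (Suc m))) UNIV"
    using assms summable_sums[OF summable_norm_cancel[OF assms]] by (rule norm_summable_imp_has_sum)
  moreover have "{0<..} = range Suc"
    by (auto simp: image_iff gr0_conv_Suc)
  ultimately show ?thesis
    by (simp add: has_sum_reindex o_def)
qed

lemma heat_mode_Suc_majorant:
  fixes v0 :: "real \<Rightarrow> real"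
  assumes t: "t > 0" and bounded: "\<And>k. 0 < k \<Longrightarrow> \<bar>coef k v0\<bar> \<le> C"
  defines "M \<equiv> \<lambda>m. sqrt 2 * pi * C * (real (Suc m) * exp (- ((real (Suc m))\<^sup>2 * pi\<^sup>2 * t)))"
  shows "summable M"
    and "\<bar>heat_mode_dx t v0 (Suc m) y\<bar> \<le> M m"
    and "\<bar>heat_mode t v0 (Suc m) y\<bar> \<le> M m"
proof -
  have "C \<ge> 0" using bounded[of 1] by simp
  have "summable (\<lambda>n. real n * exp (- ((real n)\<^sup>2 * (pi\<^sup>2 * t))))"
    using t by (intro summable_nat_mult_exp_neg_square) simp
  then show "summable M"
    unfolding M_def by (subst (asm) summable_Suc_iff[symmetric]) (simp add: mult.assoc summable_mult)
  show "\<bar>heat_mode_dx t v0 (Suc m) y\<bar> \<le> M m" for m y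
    using abs_heat_mode_dx_le[of t v0 "Suc m" y] bounded[of "Suc m"] \<open>C \<ge> 0\<close>
    unfolding M_def by (simp add: mult.assoc order_trans[OF _ mult_left_mono] mult_right_mono)
  have "1 \<le> pi * real (Suc m)"
    using pi_ge_two by (intro order_trans[OF _ mult_mono[of 1 pi 1 "real (Suc m)"]]) auto
  have "\<bar>heat_mode t v0 (Suc m) y\<bar> \<le> sqrt 2 * exp (- ((real (Suc m))\<^sup>2 * pi\<^sup>2 * t)) * \<bar>coef (Suc m) v0\<bar>"
    by (rule abs_heat_mode_le)
  also have "\<dots> \<le> sqrt 2 * exp (- ((real (Suc m))\<^sup>2 * pi\<^sup>2 * t)) * C * 1"
    using bounded[of "Suc m"] by (simp add: mult_left_mono)
  also have "\<dots> \<le> sqrt 2 * exp (- ((real (Suc m))\<^sup>2 * pi\<^sup>2 * t)) * C * (pi * real (Suc m))"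
    using \<open>1 \<le> pi * real (Suc m)\<close> \<open>C \<ge> 0\<close> by (intro mult_left_mono) auto
  also have "\<dots> = M m"
    by (simp add: M_def algebra_simps)
  finally show "\<bar>heat_mode t v0 (Suc m) y\<bar> \<le> M m" .
qed

lemma heat_flow_eq_heat_modes: "heat_flow t v0 x = 1 + (\<Sum>m. heat_mode t v0 (Suc m) x)"
  by (simp add: heat_flow_def heat_mode_def)

lemma heat_flow_has_derivative:
  fixes v0 :: "real \<Rightarrow> real"
  assumes t: "t > 0" and bounded: "\<And>k. 0 < k \<Longrightarrow> \<bar>coef k v0\<bar> \<le> C"
  shows "(heat_flow t v0 has_real_derivative (\<Sum>m. heat_mode_dx t v0 (Suc m) x)) (at x)"
proof -
  note majorant = heat_mode_Suc_majorant[OF t bounded]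
  have uniform: "uniformly_convergent_on UNIV (\<lambda>n y. \<Sum>i<n. heat_mode_dx t v0 (Suc i) y)"
    by (rule Weierstrass_m_test'[OF _ majorant(1)]) (use majorant(2) in simp)
  have "summable (\<lambda>m. heat_mode t v0 (Suc m) 0)"
    using majorant by (intro summable_comparison_test[OF _ majorant(1)]) auto
  moreover have "((\<lambda>y. heat_mode t v0 (Suc m) y) has_field_derivative heat_mode_dx t v0 (Suc m) y) (at y within UNIV)"
    for m y
    using heat_mode_has_derivative[of t v0 "Suc m" y] by simp
  ultimately have "((\<lambda>y. \<Sum>m. heat_mode t v0 (Suc m) y) has_real_derivative (\<Sum>m. heat_mode_dx t v0 (Suc m) x)) (at x)"
    using has_field_derivative_series'(2)[OF convex_UNIV _ uniform UNIV_I] by simp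
  then show ?thesis
    unfolding heat_flow_eq_heat_modes[abs_def] using DERIV_add[OF DERIV_const] by fastforce
qed

lemma ColeHopf_C_heat_flow:
  fixes v0 :: "real \<Rightarrow> real"
  assumes t: "t > 0" and bounded: "\<And>k. 0 < k \<Longrightarrow> \<bar>coef k v0\<bar> \<le> C"
  shows "ColeHopf_C (heat_flow t v0) x
    = (\<Sum>\<^sub>\<infinity>k. - 2 * heat_mode_dx t v0 k x) / (1 + (\<Sum>\<^sub>\<infinity>k\<in>{0<..}. heat_mode t v0 k x))"
proof -
  note majorant = heat_mode_Suc_majorant[OF t bounded]
  have "summable (\<lambda>m. norm (heat_mode t v0 (Suc m) x))"
    using majorant by (intro summable_comparison_test[OF _ majorant(1)]) auto
  then have denominator: "(\<Sum>m. heat_mode t v0 (Suc m) x) = (\<Sum>\<^sub>\<infinity>k\<in>{0<..}. heat_mode t v0 k x)"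
    by (rule infsumI[OF has_sum_greaterThan_0_Suc, symmetric])
  have "summable (\<lambda>m. norm (- 2 * heat_mode_dx t v0 (Suc m) x))"
    using majorant by (intro summable_comparison_test[OF _ summable_mult[OF majorant(1), of 2]]) (auto simp: abs_mult)
  from has_sum_insert[OF _ has_sum_greaterThan_0_Suc[OF this], of 0]
  have "((\<lambda>k. - 2 * heat_mode_dx t v0 k x) has_sum (\<Sum>m. - 2 * heat_mode_dx t v0 (Suc m) x)) (insert 0 {0<..})"
    by (simp add: heat_mode_dx_def)
  moreover have "insert 0 {0<..} = (UNIV :: nat set)"
    by auto
  ultimately have "((\<lambda>k. - 2 * heat_mode_dx t v0 k x) has_sum (\<Sum>m. - 2 * heat_mode_dx t v0 (Suc m) x)) UNIV"
    by simp
  moreover have "summable (\<lambda>m. heat_mode_dx t v0 (Suc m) x)"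
    using majorant by (intro summable_comparison_test[OF _ majorant(1)]) auto
  ultimately have numerator: "(\<Sum>\<^sub>\<infinity>k. - 2 * heat_mode_dx t v0 k x) = - 2 * (\<Sum>m. heat_mode_dx t v0 (Suc m) x)"
    by (metis infsumI suminf_mult)
  have "deriv (heat_flow t v0) x = (\<Sum>m. heat_mode_dx t v0 (Suc m) x)"
    by (rule DERIV_imp_deriv[OF heat_flow_has_derivative[OF t bounded]])
  then show ?thesis
    unfolding ColeHopf_C_def numerator by (simp add: heat_flow_eq_heat_modes denominator)
qed

section \<open>Expansion over the index set\<close>

lemma idxA_eq_image_Cons: "idxA = (\<lambda>(n, xs). n # xs) ` (UNIV \<times> lists {0<..})"
  by (auto simp: idxA_def image_iff neq_Nil_conv)

lemma has_sum_idxA: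
  fixes a b :: "nat \<Rightarrow> real"
  assumes a: "(\<lambda>n. \<bar>a n\<bar>) summable_on UNIV"
    and b: "(\<lambda>k. \<bar>b k\<bar>) summable_on {0<..}" and small: "(\<Sum>\<^sub>\<infinity>k\<in>{0<..}. \<bar>b k\<bar>) < 1"
  shows "((\<lambda>\<nu>. a (hd \<nu>) * prod_list (map b (tl \<nu>))) has_sum infsum a UNIV / (1 - infsum b {0<..})) idxA"
proof -
  have "(\<lambda>k. \<bar>\<bar>b k\<bar>\<bar>) summable_on {0<..}" "(\<Sum>\<^sub>\<infinity>k\<in>{0<..}. \<bar>\<bar>b k\<bar>\<bar>) < 1"
    using b small by simp_all
  from has_sum_imp_summable[OF has_sum_prod_list_lists[OF this]]
  have "(\<lambda>xs. \<bar>prod_list (map b xs)\<bar>) summable_on lists {0<..}"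
    unfolding abs_prod_list .
  from has_sum_product_of_abs_summable[OF a this]
  have "((\<lambda>(n, xs). a n * prod_list (map b xs)) has_sum infsum a UNIV * (1 / (1 - infsum b {0<..})))
      (UNIV \<times> lists {0<..})"
    unfolding infsumI[OF has_sum_prod_list_lists[OF b small]] .
  moreover have "inj_on (\<lambda>(n, xs). n # xs) (UNIV \<times> lists {0<..})"
    by (auto simp: inj_on_def)
  ultimately show ?thesis
    unfolding idxA_eq_image_Cons has_sum_reindex[OF \<open>inj_on _ _\<close>]
    by (simp add: o_def case_prod_unfold)
qed

lemma uniform_has_sum_idxA:
  fixes a b :: "'x \<Rightarrow> nat \<Rightarrow> real" and A B :: "nat \<Rightarrow> real"
  assumes aA: "\<And>x n. x \<in> X \<Longrightarrow> \<bar>a x n\<bar> \<le> A n" and bB: "\<And>x k. x \<in> X \<Longrightarrow> \<bar>b x k\<bar> \<le> B k"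
    and A: "A summable_on UNIV" "\<And>n. 0 \<le> A n"
    and B: "B summable_on {0<..}" "\<And>k. 0 \<le> B k" "(\<Sum>\<^sub>\<infinity>k\<in>{0<..}. B k) < 1"
  defines "T \<equiv> \<lambda>x \<nu>. a x (hd \<nu>) * ((-1) ^ (length \<nu> - 1) * prod_list (map (b x) (tl \<nu>)))"
  shows "\<And>x. x \<in> X \<Longrightarrow> (\<lambda>\<nu>. \<bar>T x \<nu>\<bar>) summable_on idxA"
    and "\<And>x. x \<in> X \<Longrightarrow> (T x has_sum infsum (a x) UNIV / (1 + infsum (b x) {0<..})) idxA"
    and "uniform_limit X (\<lambda>F x. \<Sum>\<nu>\<in>F. T x \<nu>) (\<lambda>x. infsum (a x) UNIV / (1 + infsum (b x) {0<..}))
           (finite_subsets_at_top idxA)"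
proof -
  define M where "M \<nu> = A (hd \<nu>) * prod_list (map B (tl \<nu>))" for \<nu>
  have "(M has_sum infsum A UNIV / (1 - infsum B {0<..})) idxA"
    unfolding M_def using A B by (intro has_sum_idxA) simp_all
  then have M: "M summable_on idxA"
    by (rule has_sum_imp_summable)
  have T_le_M: "\<bar>T x \<nu>\<bar> \<le> M \<nu>" if "x \<in> X" for x \<nu>
  proof -
    have "\<bar>prod_list (map (b x) (tl \<nu>))\<bar> \<le> prod_list (map B (tl \<nu>))"
      unfolding abs_prod_list using bB[OF that] by (intro prod_list_map_mono) auto
    moreover have "\<bar>T x \<nu>\<bar> = \<bar>a x (hd \<nu>)\<bar> * \<bar>prod_list (map (b x) (tl \<nu>))\<bar>"
      by (simp add: T_def abs_mult)
    ultimately show ?thesis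
      unfolding M_def using aA[OF that, of "hd \<nu>"] A(2)[of "hd \<nu>"] by (simp add: mult_mono)
  qed
  show "(\<lambda>\<nu>. \<bar>T x \<nu>\<bar>) summable_on idxA" if "x \<in> X" for x
    using T_le_M[OF that] by (intro summable_on_comparison_test[OF M]) simp_all
  have T_has_sum: "(T x has_sum infsum (a x) UNIV / (1 + infsum (b x) {0<..})) idxA" if "x \<in> X" for x
  proof -
    have "(\<lambda>n. \<bar>a x n\<bar>) summable_on UNIV"
      using aA[OF that] by (intro summable_on_comparison_test[OF A(1)]) simp_all
    moreover have b_abs: "(\<lambda>k. \<bar>- b x k\<bar>) summable_on {0<..}"
      using bB[OF that] by (intro summable_on_comparison_test[OF B(1)]) simp_all
    moreover have "(\<Sum>\<^sub>\<infinity>k\<in>{0<..}. \<bar>- b x k\<bar>) < 1"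
      using infsum_mono[OF b_abs B(1)] bB[OF that] B(3) by fastforce
    ultimately have "((\<lambda>\<nu>. a x (hd \<nu>) * prod_list (map (\<lambda>k. - b x k) (tl \<nu>)))
        has_sum infsum (a x) UNIV / (1 - infsum (\<lambda>k. - b x k) {0<..})) idxA"
      by (rule has_sum_idxA)
    then show ?thesis
      by (simp add: T_def prod_list_map_uminus infsum_uminus)
  qed
  show "(T x has_sum infsum (a x) UNIV / (1 + infsum (b x) {0<..})) idxA" if "x \<in> X" for x
    using T_has_sum[OF that] .
  show "uniform_limit X (\<lambda>F x. \<Sum>\<nu>\<in>F. T x \<nu>) (\<lambda>x. infsum (a x) UNIV / (1 + infsum (b x) {0<..}))
      (finite_subsets_at_top idxA)"
    using T_le_M T_has_sum M by (intro Weierstrass_m_test_general') simp_all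
qed

lemma heat_mode_expansion_majorants:
  fixes v0 :: "real \<Rightarrow> real"
  assumes t: "t > 0"
    and summable: "(\<lambda>k. sqrt 2 * \<bar>coef k v0\<bar>) summable_on {0<..}"
    and small: "(\<Sum>\<^sub>\<infinity>k\<in>{0<..}. sqrt 2 * \<bar>coef k v0\<bar>) \<le> 1 / 2"
  shows "\<And>k. 0 < k \<Longrightarrow> \<bar>coef k v0\<bar> \<le> 1"
    and "(\<lambda>n. 2 * (sqrt 2 * pi * (real n * exp (- ((real n)\<^sup>2 * pi\<^sup>2 * t))) * \<bar>coef n v0\<bar>)) summable_on UNIV"
    and "(\<lambda>k. sqrt 2 * exp (- ((real k)\<^sup>2 * pi\<^sup>2 * t)) * \<bar>coef k v0\<bar>) summable_on {0<..}"
    and "(\<Sum>\<^sub>\<infinity>k\<in>{0<..}. sqrt 2 * exp (- ((real k)\<^sup>2 * pi\<^sup>2 * t)) * \<bar>coef k v0\<bar>) < 1"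
proof -
  show coef_le: "\<bar>coef k v0\<bar> \<le> 1" if "0 < k" for k
  proof -
    have "sqrt 2 * \<bar>coef k v0\<bar> = (\<Sum>\<^sub>\<infinity>j\<in>{k}. sqrt 2 * \<bar>coef j v0\<bar>)"
      by simp
    also have "\<dots> \<le> 1 / 2"
      using infsum_mono2[OF _ summable, of "{k}"] that small by simp
    finally show ?thesis
      using mult_right_mono[of 1 "sqrt 2" "\<bar>coef k v0\<bar>"] by simp
  qed
  have "summable (\<lambda>n. 2 * sqrt 2 * pi * (real n * exp (- ((real n)\<^sup>2 * (pi\<^sup>2 * t)))))"
    using t by (intro summable_mult summable_nat_mult_exp_neg_square) simp
  then have "summable (\<lambda>n. 2 * (sqrt 2 * pi * (real n * exp (- ((real n)\<^sup>2 * pi\<^sup>2 * t))) * \<bar>coef n v0\<bar>))"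
  proof (rule summable_comparison_test[rotated])
    show "\<exists>N. \<forall>n\<ge>N. norm (2 * (sqrt 2 * pi * (real n * exp (- ((real n)\<^sup>2 * pi\<^sup>2 * t))) * \<bar>coef n v0\<bar>))
        \<le> 2 * sqrt 2 * pi * (real n * exp (- ((real n)\<^sup>2 * (pi\<^sup>2 * t))))"
      using coef_le by (intro exI[of _ 1] allI impI) (simp add: abs_mult mult.assoc mult_left_le)
  qed
  then show "(\<lambda>n. 2 * (sqrt 2 * pi * (real n * exp (- ((real n)\<^sup>2 * pi\<^sup>2 * t))) * \<bar>coef n v0\<bar>)) summable_on UNIV"
    by (subst summable_on_UNIV_nonneg_real_iff) simp_all
  have B_le: "sqrt 2 * exp (- ((real k)\<^sup>2 * pi\<^sup>2 * t)) * \<bar>coef k v0\<bar> \<le> sqrt 2 * \<bar>coef k v0\<bar>" for k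
  proof -
    have "exp (- ((real k)\<^sup>2 * pi\<^sup>2 * t)) \<le> 1"
      using t by simp
    then have "sqrt 2 * \<bar>coef k v0\<bar> * exp (- ((real k)\<^sup>2 * pi\<^sup>2 * t)) \<le> sqrt 2 * \<bar>coef k v0\<bar> * 1"
      by (intro mult_left_mono) auto
    then show ?thesis
      by (simp add: mult_ac)
  qed
  show B: "(\<lambda>k. sqrt 2 * exp (- ((real k)\<^sup>2 * pi\<^sup>2 * t)) * \<bar>coef k v0\<bar>) summable_on {0<..}"
    using B_le by (intro summable_on_comparison_test[OF summable]) simp_all
  have "(\<Sum>\<^sub>\<infinity>k\<in>{0<..}. sqrt 2 * exp (- ((real k)\<^sup>2 * pi\<^sup>2 * t)) * \<bar>coef k v0\<bar>) \<le> 1 / 2"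
    using infsum_mono[OF B summable] B_le small by fastforce
  then show "(\<Sum>\<^sub>\<infinity>k\<in>{0<..}. sqrt 2 * exp (- ((real k)\<^sup>2 * pi\<^sup>2 * t)) * \<bar>coef k v0\<bar>) < 1"
    by simp
qed

lemma heat_mode_expansion:
  fixes v0 :: "real \<Rightarrow> real"
  assumes t: "t > 0"
    and summable: "(\<lambda>k. sqrt 2 * \<bar>coef k v0\<bar>) summable_on {0<..}"
    and small: "(\<Sum>\<^sub>\<infinity>k\<in>{0<..}. sqrt 2 * \<bar>coef k v0\<bar>) \<le> 1 / 2"
  defines "T \<equiv> \<lambda>x \<nu>. - 2 * heat_mode_dx t v0 (hd \<nu>) x
    * ((-1) ^ (length \<nu> - 1) * (\<Prod>k\<leftarrow>tl \<nu>. heat_mode t v0 k x))"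
  shows "(\<lambda>\<nu>. \<bar>T x \<nu>\<bar>) summable_on idxA"
    and "(T x has_sum ColeHopf_C (heat_flow t v0) x) idxA"
    and "uniform_limit UNIV (\<lambda>F x. \<Sum>\<nu>\<in>F. T x \<nu>) (ColeHopf_C (heat_flow t v0)) (finite_subsets_at_top idxA)"
proof -
  note majorants = heat_mode_expansion_majorants[OF t summable small]
  have dx_bound: "\<bar>- 2 * heat_mode_dx t v0 n x\<bar>
      \<le> 2 * (sqrt 2 * pi * (real n * exp (- ((real n)\<^sup>2 * pi\<^sup>2 * t))) * \<bar>coef n v0\<bar>)" for n x
    using abs_heat_mode_dx_le by (simp add: abs_mult)
  note expansion = uniform_has_sum_idxA[where X = UNIV,
      OF dx_bound abs_heat_mode_le majorants(2) _ majorants(3) _ majorants(4)]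
  have quotient: "ColeHopf_C (heat_flow t v0)
      = (\<lambda>x. (\<Sum>\<^sub>\<infinity>n. - 2 * heat_mode_dx t v0 n x) / (1 + (\<Sum>\<^sub>\<infinity>k\<in>{0<..}. heat_mode t v0 k x)))"
    using ColeHopf_C_heat_flow[OF t majorants(1)] by (simp add: fun_eq_iff)
  show "(\<lambda>\<nu>. \<bar>T x \<nu>\<bar>) summable_on idxA"
    unfolding T_def by (rule expansion(1)) simp_all
  show "(T x has_sum ColeHopf_C (heat_flow t v0) x) idxA"
    unfolding T_def quotient by (rule expansion(2)) simp_all
  show "uniform_limit UNIV (\<lambda>F x. \<Sum>\<nu>\<in>F. T x \<nu>) (ColeHopf_C (heat_flow t v0)) (finite_subsets_at_top idxA)"
    unfolding T_def quotient by (rule expansion(3)) simp_all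
qed

lemma exp_lam_mult:
  "exp (lam \<nu> * t) = (\<Prod>k\<leftarrow>\<nu>. exp (- ((real k)\<^sup>2 * pi\<^sup>2 * t)))"
proof (induction \<nu>)
  case (Cons k \<nu>)
  have "exp (lam (k # \<nu>) * t) = exp (- ((real k)\<^sup>2 * pi\<^sup>2 * t)) * exp (lam \<nu> * t)"
    by (simp add: lam_def exp_add[symmetric] algebra_simps)
  with Cons.IH show ?case by simp
qed (simp add: lam_def)

lemma two_powr_half_add_three: "2 powr ((real m + 3) / 2) = 2 * sqrt 2 * sqrt 2 ^ m"
proof -
  have "(real m + 3) / 2 = 1 + 1 / 2 + real m / 2"
    by simp
  then have "2 powr ((real m + 3) / 2) = 2 powr 1 * 2 powr (1 / 2) * (2 powr (1 / 2)) powr real m"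
    by (simp only: powr_add powr_powr) simp
  then show ?thesis
    by (simp add: powr_half_sqrt powr_realpow)
qed

lemma series_term_Cons:
  "series_term t u0 (n # xs) x
    = - 2 * heat_mode_dx t (ColeHopf_H u0) n x
      * ((-1) ^ length xs * (\<Prod>k\<leftarrow>xs. heat_mode t (ColeHopf_H u0) k x))"
proof -
  let ?E = "\<lambda>k. exp (- ((real k)\<^sup>2 * pi\<^sup>2 * t))"
  have modes: "(\<Prod>k\<leftarrow>xs. heat_mode t (ColeHopf_H u0) k x)
      = (\<Prod>k\<leftarrow>xs. ?E k) * phi xs u0 * sqrt 2 ^ length xs * (\<Prod>k\<leftarrow>xs. cos (real k * pi * x))"
    by (simp add: heat_mode_def e_cos_def phi_def l_coef_def prod_list_map_mult map_replicate_const)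
  have "exp (lam (n # xs) * t) = ?E n * (\<Prod>k\<leftarrow>xs. ?E k)"
    unfolding exp_lam_mult by simp
  moreover have "phi (n # xs) u0 = l_coef n u0 * phi xs u0"
    by (simp add: phi_def)
  moreover have "a_fun (n # xs) x = (-1) ^ length xs * (2 * sqrt 2 * sqrt 2 ^ length xs)
      * real n * pi * sin (real n * pi * x) * (\<Prod>k\<leftarrow>xs. cos (real k * pi * x))"
    by (simp add: a_fun_def two_powr_half_add_three)
  ultimately show ?thesis
    unfolding series_term_def modes by (simp add: heat_mode_dx_def l_coef_def mult_ac)
qed

theorem mainTheorem1:
  fixes u0 :: "real \<Rightarrow> real" and t :: real
  assumes meas: "u0 \<in> borel_measurable lborel"
    and L2: "set_integrable lborel {0..1} (\<lambda>s. (u0 s)^2)"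
    and small: "2 * exp (L2norm01 u0) * L2norm01 u0 < 1"
    and tpos: "t > 0"
  shows "(\<forall>x\<in>{0..1}. ((\<lambda>\<nu>. norm (series_term t u0 \<nu> x)) summable_on idxA)
            \<and> burgers_flow t u0 x = (\<Sum>\<^sub>\<infinity>\<nu>\<in>idxA. series_term t u0 \<nu> x))
         \<and> uniform_limit {0..1} (\<lambda>F x. \<Sum>\<nu>\<in>F. series_term t u0 \<nu> x)
              (burgers_flow t u0) (finite_subsets_at_top idxA)"
proof -
  define v0 where "v0 = ColeHopf_H u0"
  have "(\<lambda>k. sqrt 2 * \<bar>coef k v0\<bar>) summable_on {0<..}" "(\<Sum>\<^sub>\<infinity>k\<in>{0<..}. sqrt 2 * \<bar>coef k v0\<bar>) \<le> 1 / 2"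
    using l_coef_abs_summable[OF meas L2 small] by (simp_all add: v0_def l_coef_def)
  note expansion = heat_mode_expansion[OF tpos this]
  have series_term: "series_term t u0 \<nu> x
      = - 2 * heat_mode_dx t v0 (hd \<nu>) x * ((-1) ^ (length \<nu> - 1) * (\<Prod>k\<leftarrow>tl \<nu>. heat_mode t v0 k x))"
    if "\<nu> \<in> idxA" for \<nu> x
    using that series_term_Cons[of t u0 _ _ x] by (auto simp: idxA_def neq_Nil_conv v0_def)
  have burgers: "burgers_flow t u0 = ColeHopf_C (heat_flow t v0)"
    by (simp add: fun_eq_iff burgers_flow_def v0_def)
  have "(\<lambda>\<nu>. norm (series_term t u0 \<nu> x)) summable_on idxA" for x
    using expansion(1)[of x] by (rule summable_on_cong[THEN iffD1, rotated]) (simp add: series_term)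
  moreover have "burgers_flow t u0 x = (\<Sum>\<^sub>\<infinity>\<nu>\<in>idxA. series_term t u0 \<nu> x)" for x
    using infsumI[OF expansion(2)[of x]] by (simp add: burgers series_term cong: infsum_cong)
  moreover have "uniform_limit {0..1} (\<lambda>F x. \<Sum>\<nu>\<in>F. series_term t u0 \<nu> x) (burgers_flow t u0)
      (finite_subsets_at_top idxA)"
    using uniform_limit_on_subset[OF expansion(3), of "{0..1}"] unfolding burgers
    by (rule uniform_limit_cong[THEN iffD1, rotated 2])
      (auto intro: eventually_finite_subsets_at_top_weakI sum.cong simp: series_term subsetD)
  ultimately show ?thesis
    by simp
qed

end
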